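(* Let $V\subseteq\mathcal V$ be finite and $\mathbb E,\mathbb F\in\mathit{NProg}(V)$. Then: (1) $\mathbb E\le_P^p\mathbb F$ iff $\bigvee_{\mathcal F\in\mathbb F}\mathrm{span}(\mathcal F)\subseteq\bigvee_{\mathcal E\in\mathbb E}\mathrm{span}(\mathcal E)$; (2) $\mathbb E\le_T^p\mathbb F$ iff $T_{\mathbb E}\sqsubseteq T_{\mathbb F}$ and $\bigvee_{\mathcal F\in\mathbb F}\mathrm{span}(\mathcal F\circ\mathcal P_{T_{\mathbb E}})\subseteq\bigvee_{\mathcal E\in\mathbb E}\mathrm{span}(\mathcal E\circ\mathcal P_{T_{\mathbb E}})$; (3) if both $\mathbb E$ and $\mathbb F$ contain only trace-preserving super-operators, then $\mathbb E\le_T^p\mathbb F$ iff $\mathbb E\le_P^p\mathbb F$.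
   Context: $\mathcal V$ is a countably infinite set of quantum variables, each with state space $\mathbb C^2$; for finite $V$, $\mathcal H_V=\bigotimes_{q\in V}\mathcal H_q$. $\mathcal D(\mathcal H)$: partial density operators; $\mathcal S(\mathcal H)$: projectors, identified with their image subspaces, $\sqsubseteq$ being inclusion. $\mathit{DProg}(V)$: completely positive trace-nonincreasing super-operators on $\mathcal L(\mathcal H_V)$; $\mathit{NProg}(V)$: nonempty, convex, closed subsets of $\mathit{DProg}(V)$. Operators/super-operators on subsystems are implicitly extended by tensoring with identities. For finite $W$ and $P,Q\in\mathcal S(\mathcal H_W)$: $\mathbb E\models_{tot}(\{P\},\{Q\})$ iff for every finite $X\supseteq V\cup W$ and $\rho\in\mathcal D(\mathcal H_X)$, ${\rm tr}(P\rho)\le\inf_{\mathcal E\in\mathbb E}{\rm tr}(Q\mathcal E(\rho))$; $\mathbb E\models_{par}(\{P\},\{Q\})$ iff for all such $X,\rho$, ${\rm tr}(P\rho)\le\inf_{\mathcal E\in\mathbb E}[{\rm tr}(Q\mathcal E(\rho))+{\rm tr}(\rho)-{\rm tr}(\mathcal E(\rho))]$. $\mathbb E\le_T^p\mathbb F$ iff for every finite $W$ and all $P,Q\in\mathcal S(\mathcal H_W)$, $\mathbb E\models_{tot}(\{P\},\{Q\})$ implies $\mathbb F\models_{tot}(\{P\},\{Q\})$; $\le_P^p$ likewise with $\models_{par}$. For a completely positive $\mathcal G(A)=\sum_iG_iAG_i^\dagger$, $\mathrm{span}(\mathcal G)$ is the linear span of the Kraus operators $\{G_i\}$ in $\mathcal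 L(\mathcal H_V)$ (independent of representation); $\bigvee$ of such spans denotes the smallest subspace of $\mathcal L(\mathcal H_V)$ containing them. For $\mathcal E\in\mathit{DProg}(V)$, $T_{\mathcal E}=\{|\psi\rangle:{\rm tr}(\mathcal E(|\psi\rangle\langle\psi|))={\rm tr}(|\psi\rangle\langle\psi|)\}$, and $T_{\mathbb E}=\bigcap_{\mathcal E\in\mathbb E}T_{\mathcal E}$ (a subspace, identified with its projector). $\mathcal P_{T}$ denotes the super-operator $\rho\mapsto T\rho T$. *)

theory Defs
  imports Complex_Main
begin

text \<open>Each variable has state space C^2. For finite V, a computational basis of H_V
  is indexed by the subsets S of V (q in S means q is in state |1>).
  Vectors of H_V are functions on subsets of V, operators on H_V are matrices
  indexed by pairs of subsets of V; entries outside Pow V are required to be 0.\<close>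

type_synonym qvar = nat
type_synonym vec = "qvar set \<Rightarrow> complex"
type_synonym op = "qvar set \<Rightarrow> qvar set \<Rightarrow> complex"
type_synonym superop = "op \<Rightarrow> op"

definition supp_vec :: "qvar set \<Rightarrow> vec \<Rightarrow> bool" where
  "supp_vec V \<psi> \<longleftrightarrow> (\<forall>S. \<not> S \<subseteq> V \<longrightarrow> \<psi> S = 0)"

definition supp_op :: "qvar set \<Rightarrow> op \<Rightarrow> bool" where
  "supp_op V A \<longleftrightarrow> (\<forall>S T. \<not> (S \<subseteq> V \<and> T \<subseteq> V) \<longrightarrow> A S T = 0)"

definition mmult :: "qvar set \<Rightarrow> op \<Rightarrow> op \<Rightarrow> op" where
  "mmult V A B = (\<lambda>S T. if S \<subseteq> V \<and> T \<subseteq> V then (\<Sum>U\<in>Pow V. A S U * B U T) else 0)"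

definition adj :: "op \<Rightarrow> op" where
  "adj A = (\<lambda>S T. cnj (A T S))"

definition trace :: "qvar set \<Rightarrow> op \<Rightarrow> complex" where
  "trace V A = (\<Sum>S\<in>Pow V. A S S)"

definition apply_op :: "qvar set \<Rightarrow> op \<Rightarrow> vec \<Rightarrow> vec" where
  "apply_op V A \<psi> = (\<lambda>S. if S \<subseteq> V then (\<Sum>T\<in>Pow V. A S T * \<psi> T) else 0)"

definition inner :: "qvar set \<Rightarrow> vec \<Rightarrow> vec \<Rightarrow> complex" where
  "inner V \<phi> \<psi> = (\<Sum>S\<in>Pow V. cnj (\<phi> S) * \<psi> S)"

definition outer :: "qvar set \<Rightarrow> vec \<Rightarrow> vec \<Rightarrow> op" where
  "outer V \<psi> \<phi> = (\<lambda>S T. if S \<subseteq> V \<and> T \<subseteq> V then \<psi> S * cnj (\<phi> T) else 0)"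

definition positive_op :: "qvar set \<Rightarrow> op \<Rightarrow> bool" where
  "positive_op V A \<longleftrightarrow> supp_op V A \<and>
     (\<forall>\<psi>. supp_vec V \<psi> \<longrightarrow> inner V \<psi> (apply_op V A \<psi>) \<in> \<real> \<and> 0 \<le> Re (inner V \<psi> (apply_op V A \<psi>)))"

definition density :: "qvar set \<Rightarrow> op \<Rightarrow> bool" where
  "density V \<rho> \<longleftrightarrow> positive_op V \<rho> \<and> Re (trace V \<rho>) \<le> 1"

definition projector :: "qvar set \<Rightarrow> op \<Rightarrow> bool" where
  "projector V P \<longleftrightarrow> supp_op V P \<and> adj P = P \<and> mmult V P P = P"

definition op_range :: "qvar set \<Rightarrow> op \<Rightarrow> vec set" where
  "op_range V P = {apply_op V P \<psi> | \<psi>. supp_vec V \<psi>}"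

definition proj_of :: "qvar set \<Rightarrow> vec set \<Rightarrow> op" where
  "proj_of V K = (THE P. projector V P \<and> op_range V P = K)"

definition kraus_rep :: "qvar set \<Rightarrow> op list \<Rightarrow> superop \<Rightarrow> bool" where
  "kraus_rep V Ks E \<longleftrightarrow> (\<forall>K\<in>set Ks. supp_op V K) \<and>
     E = (\<lambda>\<rho> S T. \<Sum>K\<leftarrow>Ks. mmult V (mmult V K \<rho>) (adj K) S T)"

text \<open>DProg(V): completely positive (i.e. having a Kraus representation)
  trace-nonincreasing super-operators on L(H_V).\<close>
definition dprog :: "qvar set \<Rightarrow> superop \<Rightarrow> bool" where
  "dprog V E \<longleftrightarrow> (\<exists>Ks. kraus_rep V Ks E) \<and>
     (\<forall>\<rho>. positive_op V \<rho> \<longrightarrow> Re (trace V (E \<rho>)) \<le> Re (trace V \<rho>))"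

definition trace_preserving :: "qvar set \<Rightarrow> superop \<Rightarrow> bool" where
  "trace_preserving V E \<longleftrightarrow> (\<forall>\<rho>. supp_op V \<rho> \<longrightarrow> trace V (E \<rho>) = trace V \<rho>)"

definition convex_so :: "superop set \<Rightarrow> bool" where
  "convex_so \<E> \<longleftrightarrow> (\<forall>E\<in>\<E>. \<forall>F\<in>\<E>. \<forall>t::real. 0 \<le> t \<and> t \<le> 1 \<longrightarrow>
     (\<lambda>\<rho> S T. complex_of_real t * E \<rho> S T + complex_of_real (1 - t) * F \<rho> S T) \<in> \<E>)"

text \<open>Closedness (the space of super-operators on L(H_V) is finite dimensional,
  so entrywise convergence is convergence in any norm).\<close>
definition closed_so :: "superop set \<Rightarrow> bool" where
  "closed_so \<E> \<longleftrightarrow> (\<forall>f E. (\<forall>n. f n \<in> \<E>) \<and> (\<forall>\<rho> S T. (\<lambda>n. f n \<rho> S T) \<longlonglongrightarrow> E \<rho> S T)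
     \<longrightarrow> E \<in> \<E>)"

definition nprog :: "qvar set \<Rightarrow> superop set \<Rightarrow> bool" where
  "nprog V \<E> \<longleftrightarrow> \<E> \<noteq> {} \<and> \<E> \<subseteq> {E. dprog V E} \<and> convex_so \<E> \<and> closed_so \<E>"

text \<open>Extension of an operator on H_W to H_X (W \<subseteq> X) by tensoring with the identity.\<close>
definition ext_op :: "qvar set \<Rightarrow> qvar set \<Rightarrow> op \<Rightarrow> op" where
  "ext_op W X A = (\<lambda>S T. if S \<subseteq> X \<and> T \<subseteq> X then
      A (S \<inter> W) (T \<inter> W) * (if S - W = T - W then 1 else 0) else 0)"

text \<open>Extension of a super-operator on L(H_V) to L(H_X) (V \<subseteq> X): E \<otimes> id.
  The block of rho at (a,b) (a,b subsets of X-V) is mapped by E.\<close>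
definition ext_so :: "qvar set \<Rightarrow> qvar set \<Rightarrow> superop \<Rightarrow> superop" where
  "ext_so V X E = (\<lambda>\<rho> S T. if S \<subseteq> X \<and> T \<subseteq> X then
      E (\<lambda>S' T'. if S' \<subseteq> V \<and> T' \<subseteq> V then \<rho> (S' \<union> (S - V)) (T' \<union> (T - V)) else 0)
        (S \<inter> V) (T \<inter> V) else 0)"

definition valid_tot :: "qvar set \<Rightarrow> superop set \<Rightarrow> qvar set \<Rightarrow> op \<Rightarrow> op \<Rightarrow> bool" where
  "valid_tot V \<E> W P Q \<longleftrightarrow> (\<forall>X \<rho>. finite X \<and> V \<union> W \<subseteq> X \<and> density X \<rho> \<longrightarrow>
     Re (trace X (mmult X (ext_op W X P) \<rho>))
       \<le> (INF E\<in>\<E>. Re (trace X (mmult X (ext_op W X Q) (ext_so V X E \<rho>)))))"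

definition valid_par :: "qvar set \<Rightarrow> superop set \<Rightarrow> qvar set \<Rightarrow> op \<Rightarrow> op \<Rightarrow> bool" where
  "valid_par V \<E> W P Q \<longleftrightarrow> (\<forall>X \<rho>. finite X \<and> V \<union> W \<subseteq> X \<and> density X \<rho> \<longrightarrow>
     Re (trace X (mmult X (ext_op W X P) \<rho>))
       \<le> (INF E\<in>\<E>. Re (trace X (mmult X (ext_op W X Q) (ext_so V X E \<rho>)))
                    + Re (trace X \<rho>) - Re (trace X (ext_so V X E \<rho>))))"

definition le_T :: "qvar set \<Rightarrow> superop set \<Rightarrow> superop set \<Rightarrow> bool" where
  "le_T V \<E> \<F> \<longleftrightarrow> (\<forall>W P Q. finite W \<and> projector W P \<and> projector W Q \<longrightarrow>
     valid_tot V \<E> W P Q \<longrightarrow> valid_tot V \<F> W P Q)"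

definition le_P :: "qvar set \<Rightarrow> superop set \<Rightarrow> superop set \<Rightarrow> bool" where
  "le_P V \<E> \<F> \<longleftrightarrow> (\<forall>W P Q. finite W \<and> projector W P \<and> projector W Q \<longrightarrow>
     valid_par V \<E> W P Q \<longrightarrow> valid_par V \<F> W P Q)"

definition cspan :: "op set \<Rightarrow> op set" where
  "cspan A = {B. \<exists>F c. finite F \<and> F \<subseteq> A \<and> B = (\<lambda>S T. \<Sum>K\<in>F. c K * K S T)}"

text \<open>span(G): span of the Kraus operators (independent of the representation;
  we take all representations).\<close>
definition kspan :: "qvar set \<Rightarrow> superop \<Rightarrow> op set" where
  "kspan V G = cspan (\<Union>{set Ks | Ks. kraus_rep V Ks G})"

definition join_span :: "qvar set \<Rightarrow> superop set \<Rightarrow> op set" where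
  "join_span V \<G> = cspan (\<Union>G\<in>\<G>. kspan V G)"

definition term_space :: "qvar set \<Rightarrow> superop \<Rightarrow> vec set" where
  "term_space V E = {\<psi>. supp_vec V \<psi> \<and>
      trace V (E (outer V \<psi> \<psi>)) = trace V (outer V \<psi> \<psi>)}"

definition term_space_set :: "qvar set \<Rightarrow> superop set \<Rightarrow> vec set" where
  "term_space_set V \<E> = {\<psi>. supp_vec V \<psi> \<and> (\<forall>E\<in>\<E>. \<psi> \<in> term_space V E)}"

definition proj_so :: "qvar set \<Rightarrow> op \<Rightarrow> superop" where
  "proj_so V P = (\<lambda>\<rho>. mmult V (mmult V P \<rho>) P)"

end

theory Submission
  imports Defs
begin

(* Both refinement orders are characterised through Kraus operators. A program
  E = sum_i K_i . K_i^dagger satisfies {P} E {Q} partially, on every extension of the state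
  space, iff each Kraus operator maps the range of P into the range of Q, i.e.
  (I - Q)(K (x) I)P = 0. This condition is linear in K, so it passes from a Kraus family to the
  whole span, which gives the "if" part of (1). For the converse one tests with the
  (unnormalised) maximally entangled vector Phi (max_ent) on two copies of H_V: K |-> (K (x) I) Phi
  is injective and linear, so with P the projector onto the line through Phi and Q the projector
  onto {(K (x) I) Phi | K in span(E)}, the first program satisfies {P}{Q} and the second one does
  only if its Kraus operators lie in span(E).
  Total correctness adds termination: {P} E {Q} holds totally iff it holds partially and every
  state in the range of P lies blockwise in T_E, the fixed space of sum_i K_i^dagger K_i.
  Restricting to T = T_E by P_T, the span argument for (2) runs as for (1) with Phi replaced by
  (T (x) I) Phi. For trace-preserving programs T_E is the whole space, P_T is the identity, and
  (2) collapses to (1). *)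

section \<open>Matrices indexed by subsets\<close>

lemma sum_Pow_cong[cong]: "X = Y \<Longrightarrow> (\<And>x. x \<subseteq> Y =simp=> f x = g x) \<Longrightarrow> sum f (Pow X) = sum g (Pow Y)"
  unfolding simp_implies_def by (rule sum.cong) auto

definition idop :: "qvar set \<Rightarrow> op" where
  "idop X = (\<lambda>S T. if S \<subseteq> X \<and> T \<subseteq> X \<and> S = T then 1 else 0)"

definition ket :: "qvar set \<Rightarrow> vec" where
  "ket S = (\<lambda>U. if U = S then 1 else 0)"

lemma supp_op_mmult[simp]: "supp_op X (mmult X A B)"
  by (simp add: supp_op_def mmult_def)

lemma supp_vec_apply_op[simp]: "supp_vec X (apply_op X A \<psi>)"
  by (simp add: supp_vec_def apply_op_def)

lemma supp_op_outer[simp]: "supp_op X (outer X u v)"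
  by (simp add: supp_op_def outer_def)

lemma supp_op_idop[simp]: "supp_op X (idop X)"
  by (simp add: supp_op_def idop_def)

lemma supp_op_adj[simp]: "supp_op X A \<Longrightarrow> supp_op X (adj A)"
  by (auto simp add: supp_op_def adj_def)

lemma supp_op_diff[simp]: "supp_op X A \<Longrightarrow> supp_op X B \<Longrightarrow> supp_op X (A - B)"
  by (auto simp add: supp_op_def)

lemma adj_adj[simp]: "adj (adj A) = A"
  by (simp add: adj_def)

lemma adj_diff: "adj (A - B) = adj A - adj B"
  by (simp add: adj_def fun_eq_iff)

lemma adj_idop[simp]: "adj (idop X) = idop X"
  by (auto simp add: adj_def idop_def fun_eq_iff)

lemma mmult_assoc: "mmult X (mmult X A B) C = mmult X A (mmult X B C)"
proof (intro ext)
  fix S T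
  show "mmult X (mmult X A B) C S T = mmult X A (mmult X B C) S T"
  proof (cases "S \<subseteq> X \<and> T \<subseteq> X")
    case True
    have "mmult X (mmult X A B) C S T = (\<Sum>U\<in>Pow X. \<Sum>W\<in>Pow X. A S W * B W U * C U T)"
      using True by (simp add: mmult_def sum_distrib_right)
    also have "\<dots> = (\<Sum>W\<in>Pow X. \<Sum>U\<in>Pow X. A S W * B W U * C U T)"
      by (rule sum.swap)
    also have "\<dots> = mmult X A (mmult X B C) S T"
      using True by (simp add: mmult_def sum_distrib_left mult.assoc)
    finally show ?thesis .
  qed (auto simp add: mmult_def)
qed

lemma trace_mmult_commute: "trace X (mmult X A B) = trace X (mmult X B A)"
proof -
  have "trace X (mmult X A B) = (\<Sum>S\<in>Pow X. \<Sum>U\<in>Pow X. A S U * B U S)"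
    by (simp add: trace_def mmult_def)
  also have "\<dots> = (\<Sum>U\<in>Pow X. \<Sum>S\<in>Pow X. B U S * A S U)"
    by (subst sum.swap) (simp add: mult.commute)
  also have "\<dots> = trace X (mmult X B A)"
    by (simp add: trace_def mmult_def)
  finally show ?thesis .
qed

lemma adj_mmult: "adj (mmult X A B) = mmult X (adj B) (adj A)"
  by (auto simp add: adj_def mmult_def fun_eq_iff mult.commute)

lemma apply_op_mmult: "apply_op X (mmult X A B) \<psi> = apply_op X A (apply_op X B \<psi>)"
proof (intro ext)
  fix S
  show "apply_op X (mmult X A B) \<psi> S = apply_op X A (apply_op X B \<psi>) S"
  proof (cases "S \<subseteq> X")
    case True
    have "apply_op X (mmult X A B) \<psi> S = (\<Sum>T\<in>Pow X. \<Sum>U\<in>Pow X. A S U * B U T * \<psi> T)"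
      using True by (simp add: apply_op_def mmult_def sum_distrib_right)
    also have "\<dots> = (\<Sum>U\<in>Pow X. \<Sum>T\<in>Pow X. A S U * B U T * \<psi> T)"
      by (rule sum.swap)
    also have "\<dots> = apply_op X A (apply_op X B \<psi>) S"
      using True by (simp add: apply_op_def sum_distrib_left mult.assoc)
    finally show ?thesis .
  qed (simp add: apply_op_def)
qed

lemma inner_adj: "inner X u (apply_op X A v) = inner X (apply_op X (adj A) u) v"
proof -
  have "inner X u (apply_op X A v) = (\<Sum>S\<in>Pow X. \<Sum>T\<in>Pow X. cnj (u S) * A S T * v T)"
    by (simp add: inner_def apply_op_def sum_distrib_left mult.assoc)
  also have "\<dots> = (\<Sum>T\<in>Pow X. \<Sum>S\<in>Pow X. cnj (u S) * A S T * v T)"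
    by (rule sum.swap)
  also have "\<dots> = inner X (apply_op X (adj A) u) v"
    by (simp add: inner_def apply_op_def adj_def sum_distrib_right sum_distrib_left ac_simps)
  finally show ?thesis .
qed

lemma mmult_outer_left: "mmult X A (outer X u v) = outer X (apply_op X A u) v"
  by (auto simp add: mmult_def outer_def apply_op_def fun_eq_iff sum_distrib_right mult.assoc
     )

lemma mmult_outer_right: "mmult X (outer X u v) (adj B) = outer X u (apply_op X B v)"
  by (auto simp add: mmult_def outer_def apply_op_def adj_def fun_eq_iff sum_distrib_left
      mult.commute mult.left_commute)

lemma mmult_outer_outer: "mmult X (outer X u v) (outer X w z) = outer X (\<lambda>S. inner X v w * u S) z"
  by (auto simp add: mmult_def outer_def inner_def fun_eq_iff sum_distrib_left sum_distrib_right
      mult.commute mult.left_commute)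

lemma trace_outer: "trace X (outer X u v) = inner X v u"
  by (simp add: trace_def outer_def inner_def mult.commute)

lemma trace_mmult_outer: "trace X (mmult X A (outer X u v)) = inner X v (apply_op X A u)"
  by (simp add: mmult_outer_left trace_outer)

lemma inner_self_eq: "inner X u u = complex_of_real (\<Sum>S\<in>Pow X. (cmod (u S))\<^sup>2)"
  by (simp add: inner_def complex_norm_square[symmetric] mult.commute)

lemma inner_self_Re_nonneg: "Re (inner X u u) \<ge> 0"
  by (simp add: inner_self_eq sum_nonneg)

lemma inner_self_real: "inner X u u = complex_of_real (Re (inner X u u))"
  by (simp add: inner_self_eq)

lemma inner_self_Re_eq_0D: assumes "finite X" "supp_vec X u" "Re (inner X u u) = 0" shows "u = (\<lambda>_. 0)"
proof (rule ext)
  fix S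
  have "\<forall>x\<in>Pow X. (cmod (u x))\<^sup>2 = 0"
    using assms by (subst sum_nonneg_eq_0_iff[symmetric]) (auto simp: inner_self_eq)
  then show "u S = 0" using assms(2) by (cases "S \<subseteq> X") (auto simp: supp_vec_def)
qed

lemma if_1_0_mult[simp]: "(if P then 1 else 0) * (a::complex) = (if P then a else 0)"
  "a * (if P then 1 else 0) = (if P then a else 0)" by auto

lemma mmult_idop_left: "finite X \<Longrightarrow> supp_op X A \<Longrightarrow> mmult X (idop X) A = A"
  by (auto simp add: mmult_def idop_def fun_eq_iff supp_op_def conj_commute cong: conj_cong)

lemma mmult_idop_right: "finite X \<Longrightarrow> supp_op X A \<Longrightarrow> mmult X A (idop X) = A"
  by (auto simp add: mmult_def idop_def fun_eq_iff supp_op_def)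

lemma apply_op_idop: "finite X \<Longrightarrow> supp_vec X u \<Longrightarrow> apply_op X (idop X) u = u"
  by (auto simp add: apply_op_def idop_def fun_eq_iff supp_vec_def)

lemma mmult_diff_left: "mmult X (A - B) C = mmult X A C - mmult X B C"
  by (auto simp add: mmult_def fun_eq_iff algebra_simps sum_subtractf)

lemma mmult_diff_right: "mmult X A (B - C) = mmult X A B - mmult X A C"
  by (auto simp add: mmult_def fun_eq_iff algebra_simps sum_subtractf)

lemma trace_diff: "trace X (A - B) = trace X A - trace X B"
  by (simp add: trace_def sum_subtractf)

lemma apply_op_diff: "apply_op X (A - B) u = (\<lambda>S. apply_op X A u S - apply_op X B u S)"
  by (auto simp add: apply_op_def fun_eq_iff algebra_simps sum_subtractf)

lemma apply_op_compl: "finite X \<Longrightarrow> supp_vec X y \<Longrightarrow> apply_op X (idop X - R) y = (\<lambda>S. y S - apply_op X R y S)"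
  by (simp add: apply_op_diff apply_op_idop)

lemma apply_op_ket: "S \<subseteq> X \<Longrightarrow> finite X \<Longrightarrow> apply_op X A (ket S) = (\<lambda>U. if U \<subseteq> X then A U S else 0)"
  by (auto simp add: apply_op_def ket_def fun_eq_iff)

lemma op_eqI_ket: assumes "finite X" "supp_op X A" "supp_op X B"
  "\<And>S. S \<subseteq> X \<Longrightarrow> apply_op X A (ket S) = apply_op X B (ket S)"
  shows "A = B"
proof (intro ext)
  fix U S
  show "A U S = B U S"
  proof (cases "U \<subseteq> X \<and> S \<subseteq> X")
    case True
    then have "apply_op X A (ket S) U = apply_op X B (ket S) U" using assms(4) by simp
    then show ?thesis using True assms(1) by (simp add: apply_op_ket)
  qed (use assms(2,3) in \<open>auto simp: supp_op_def\<close>)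
qed

lemma supp_vec_ket: "S \<subseteq> X \<Longrightarrow> supp_vec X (ket S)"
  by (auto simp: supp_vec_def ket_def)

lemma apply_op_lincomb: "apply_op X A (\<lambda>S. a * u S + b * v S) = (\<lambda>S. a * apply_op X A u S + b * apply_op X A v S)"
  by (auto simp: apply_op_def fun_eq_iff sum.distrib sum_distrib_left algebra_simps)

lemma apply_op_vec_diff: "apply_op X A (\<lambda>S. u S - v S) = (\<lambda>S. apply_op X A u S - apply_op X A v S)"
  by (auto simp: apply_op_def fun_eq_iff sum_subtractf algebra_simps)

lemma apply_op_zero_vec[simp]: "apply_op X A (\<lambda>S. 0) = (\<lambda>S. 0)"
  by (auto simp: apply_op_def fun_eq_iff)

lemma inner_lincomb_right: "inner X w (\<lambda>S. a * u S + b * v S) = a * inner X w u + b * inner X w v"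
  by (simp add: inner_def sum.distrib sum_distrib_left algebra_simps)

lemma inner_lincomb_left: "inner X (\<lambda>S. a * u S + b * v S) w = cnj a * inner X u w + cnj b * inner X v w"
  by (simp add: inner_def sum.distrib sum_distrib_left algebra_simps)

lemma inner_diff_right: "inner X w (\<lambda>S. u S - v S) = inner X w u - inner X w v"
  by (simp add: inner_def sum_subtractf algebra_simps)

lemma inner_diff_left: "inner X (\<lambda>S. u S - v S) w = inner X u w - inner X v w"
  by (simp add: inner_def sum_subtractf algebra_simps)

lemma cnj_inner: "cnj (inner X u v) = inner X v u"
  by (simp add: inner_def mult.commute)

lemma inner_zero[simp]: "inner X u (\<lambda>S. 0) = 0" "inner X (\<lambda>S. 0) u = 0"
  by (simp_all add: inner_def)

lemma apply_op_outer: "apply_op X (outer X u v) w = (\<lambda>S. if S \<subseteq> X then u S * inner X v w else 0)"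
  by (auto simp: apply_op_def outer_def inner_def fun_eq_iff sum_distrib_left ac_simps)

lemma adj_outer: "adj (outer X u v) = outer X v u"
  by (auto simp: adj_def outer_def fun_eq_iff)

lemma mmult_add_left: "mmult X (\<lambda>S T. A S T + B S T) C = (\<lambda>S T. mmult X A C S T + mmult X B C S T)"
  by (auto simp: mmult_def fun_eq_iff sum.distrib algebra_simps)

lemma mmult_add_right: "mmult X C (\<lambda>S T. A S T + B S T) = (\<lambda>S T. mmult X C A S T + mmult X C B S T)"
  by (auto simp: mmult_def fun_eq_iff sum.distrib algebra_simps)

lemma mmult_scale_left: "mmult X (\<lambda>S T. c * A S T) B = (\<lambda>S T. c * mmult X A B S T)"
  by (auto simp: mmult_def fun_eq_iff sum_distrib_left algebra_simps)

lemma mmult_scale_right: "mmult X B (\<lambda>S T. c * A S T) = (\<lambda>S T. c * mmult X B A S T)"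
  by (auto simp: mmult_def fun_eq_iff sum_distrib_left algebra_simps)

lemma mmult_zero_left[simp]: "mmult X (\<lambda>S T. 0) B = (\<lambda>S T. 0)"
  by (auto simp: mmult_def fun_eq_iff)

lemma mmult_zero_right[simp]: "mmult X B (\<lambda>S T. 0) = (\<lambda>S T. 0)"
  by (auto simp: mmult_def fun_eq_iff)

lemma outer_zero[simp]: "outer X (\<lambda>S. 0) v = (\<lambda>S T. 0)" "outer X v (\<lambda>S. 0) = (\<lambda>S T. 0)"
  by (auto simp: outer_def fun_eq_iff)

lemma apply_op_add_op: "apply_op X (\<lambda>S T. A S T + B S T) x = (\<lambda>S. apply_op X A x S + apply_op X B x S)"
  by (auto simp: apply_op_def fun_eq_iff sum.distrib algebra_simps)

lemma apply_op_scale_op: "apply_op X (\<lambda>S T. c * A S T) x = (\<lambda>S. c * apply_op X A x S)"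
  by (auto simp: apply_op_def fun_eq_iff sum_distrib_left algebra_simps)

lemma apply_op_zero_op[simp]: "apply_op X (\<lambda>S T. 0) x = (\<lambda>S. 0)"
  by (auto simp: apply_op_def fun_eq_iff)

lemma trace_add: "trace X (\<lambda>S T. A S T + B S T) = trace X A + trace X B"
  by (simp add: trace_def sum.distrib)

lemma trace_scale: "trace X (\<lambda>S T. c * A S T) = c * trace X A"
  by (simp add: trace_def sum_distrib_left)

lemma trace_sum_list: "trace X (\<lambda>S T. \<Sum>K\<leftarrow>Ks. f K S T) = (\<Sum>K\<leftarrow>Ks. trace X (f K))"
  by (induction Ks) (simp_all add: trace_def sum.distrib)

lemma mmult_sum_list_right: "mmult X Q (\<lambda>S T. \<Sum>K\<leftarrow>Ks. f K S T) = (\<lambda>S T. \<Sum>K\<leftarrow>Ks. mmult X Q (f K) S T)"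
proof (induction Ks)
  case Nil then show ?case by simp
next
  case (Cons K Ks)
  have "mmult X Q (\<lambda>S T. \<Sum>K\<leftarrow>K # Ks. f K S T) = mmult X Q (\<lambda>S T. f K S T + (\<lambda>S T. \<Sum>K\<leftarrow>Ks. f K S T) S T)"
    by simp
  also have "\<dots> = (\<lambda>S T. mmult X Q (f K) S T + mmult X Q (\<lambda>S T. \<Sum>K\<leftarrow>Ks. f K S T) S T)"
    by (rule mmult_add_right)
  finally show ?case using Cons by simp
qed

lemma mmult_sum_list_left: "mmult X (\<lambda>S T. \<Sum>K\<leftarrow>Ks. f K S T) Q = (\<lambda>S T. \<Sum>K\<leftarrow>Ks. mmult X (f K) Q S T)"
proof (induction Ks)
  case (Cons a Ks)
  have "(\<lambda>S T. \<Sum>K\<leftarrow>a # Ks. f K S T) = (\<lambda>S T. f a S T + (\<lambda>S T. \<Sum>K\<leftarrow>Ks. f K S T) S T)" by simp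
  then show ?case using Cons by (simp only: mmult_add_left) simp
qed simp

lemma apply_op_sum_list: "apply_op X (\<lambda>S T. \<Sum>K\<leftarrow>Ks. f K S T) \<phi> = (\<lambda>S. \<Sum>K\<leftarrow>Ks. apply_op X (f K) \<phi> S)"
proof (induction Ks)
  case (Cons a Ks)
  have "(\<lambda>S T. \<Sum>K\<leftarrow>a # Ks. f K S T) = (\<lambda>S T. f a S T + (\<lambda>S T. \<Sum>K\<leftarrow>Ks. f K S T) S T)" by simp
  then show ?case using Cons by (simp only: apply_op_add_op) simp
qed simp

lemma inner_sum_list: "inner X u (\<lambda>S. \<Sum>K\<leftarrow>Ks. f K S) = (\<Sum>K\<leftarrow>Ks. inner X u (f K))"
  by (induction Ks) (simp_all add: inner_def sum.distrib algebra_simps)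

lemma sum_list_nonneg_le_0_imp_eq_0:
  fixes f :: "'a \<Rightarrow> real"
  assumes "\<And>x. x \<in> set xs \<Longrightarrow> 0 \<le> f x" and "(\<Sum>x\<leftarrow>xs. f x) \<le> 0" and "x \<in> set xs"
  shows "f x = 0"
  using assms sum_list_nonneg_eq_0_iff[of "map f xs"] sum_list_nonneg[of "map f xs"] by fastforce

lemma Re_sum_list: "Re (\<Sum>x\<leftarrow>xs. f x) = (\<Sum>x\<leftarrow>xs. Re (f x))"
  by (induction xs) simp_all

lemma Im_sum_list_inner_self: "Im (\<Sum>K\<leftarrow>Ks. inner X (f K) (f K)) = 0"
  by (induction Ks) (simp_all, metis Im_complex_of_real inner_self_real)

lemma apply_op_scale_vec: "apply_op X A (\<lambda>S. c * u S) = (\<lambda>S. c * apply_op X A u S)"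
  by (auto simp: apply_op_def fun_eq_iff sum_distrib_left ac_simps)

lemma inner_scale_self: "inner X (\<lambda>S. c * u S) (\<lambda>S. c * u S) = cnj c * c * inner X u u"
  by (simp add: inner_def sum_distrib_left ac_simps)

lemma exists_scale_inner_self_le_1:
  fixes \<psi> :: vec
  obtains r :: real where "r > 0" "Re (inner X (\<lambda>S. complex_of_real r * \<psi> S) (\<lambda>S. complex_of_real r * \<psi> S)) \<le> 1"
proof -
  define n where "n = Re (inner X \<psi> \<psi>)"
  have n0: "n \<ge> 0" by (simp add: n_def inner_self_Re_nonneg)
  define r where "r = 1 / (1 + n)"
  have r0: "r > 0" using n0 by (simp add: r_def)
  have "Re (inner X (\<lambda>S. complex_of_real r * \<psi> S) (\<lambda>S. complex_of_real r * \<psi> S)) = r * r * n"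
    by (simp add: inner_scale_self n_def)
  also have "\<dots> = n / ((1 + n) * (1 + n))" by (simp add: r_def)
  also have "\<dots> \<le> 1"
  proof -
    have "(1 + n) * (1 + n) = 1 + 2 * n + n * n" by (simp add: algebra_simps)
    moreover have "n * n \<ge> 0" by simp
    ultimately have "n \<le> (1 + n) * (1 + n)" using n0 by linarith
    moreover have "(1 + n) * (1 + n) > 0" using n0 by (simp add: add_pos_nonneg)
    ultimately show ?thesis by (simp add: divide_le_eq_1)
  qed
  finally show ?thesis using that r0 by blast
qed

lemma minus_zero_op[simp]: "A - (\<lambda>S T. 0) = (A :: op)"
  by (simp add: fun_eq_iff)

lemma trace_mmult_compl: "finite X \<Longrightarrow> supp_op X M \<Longrightarrow> trace X (mmult X (idop X - Q) M) = trace X M - trace X (mmult X Q M)"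
  by (simp add: mmult_diff_left mmult_idop_left trace_diff)

lemma sandwich_mmult:
  "mmult X (mmult X (mmult X A P) \<rho>) (adj (mmult X A P)) = mmult X (mmult X A (mmult X (mmult X P \<rho>) (adj P))) (adj A)"
  by (simp add: adj_mmult mmult_assoc)

lemma trace_sandwich_cyclic: "trace X (mmult X (mmult X A \<tau>) (adj A)) = trace X (mmult X (mmult X (adj A) A) \<tau>)"
proof -
  have "trace X (mmult X (mmult X A \<tau>) (adj A)) = trace X (mmult X (adj A) (mmult X A \<tau>))"
    by (rule trace_mmult_commute)
  then show ?thesis by (simp only: mmult_assoc)
qed

lemma Im_trace_outer_self: "Im (trace X (outer X \<phi> \<phi>)) = 0"
  by (simp add: trace_outer) (metis Im_complex_of_real inner_self_real)

section \<open>Projectors and positive operators\<close>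

lemma projector_idem: "projector X R \<Longrightarrow> mmult X R R = R"
  by (simp add: projector_def)

lemma projector_adj: "projector X R \<Longrightarrow> adj R = R"
  by (simp add: projector_def)

lemma apply_op_projector_idem: "projector X R \<Longrightarrow> apply_op X R (apply_op X R u) = apply_op X R u"
  by (metis apply_op_mmult projector_idem)

lemma op_range_projector: "projector X R \<Longrightarrow> op_range X R = {y. supp_vec X y \<and> apply_op X R y = y}"
proof -
  assume p: "projector X R"
  show ?thesis unfolding op_range_def
  proof (intro set_eqI iffI)
    fix y assume "y \<in> {apply_op X R \<psi> |\<psi>. supp_vec X \<psi>}"
    then obtain \<psi> where "y = apply_op X R \<psi>" by blast
    then show "y \<in> {y. supp_vec X y \<and> apply_op X R y = y}" using apply_op_projector_idem[OF p] by simp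
  next
    fix y assume "y \<in> {y. supp_vec X y \<and> apply_op X R y = y}"
    then show "y \<in> {apply_op X R \<psi> |\<psi>. supp_vec X \<psi>}" by force
  qed
qed

lemma inner_projector: "projector X R \<Longrightarrow> inner X (apply_op X R u) (apply_op X R u) = inner X u (apply_op X R u)"
  by (metis inner_adj projector_adj apply_op_projector_idem)

lemma projector_compl: assumes "finite X" "projector X R" shows "projector X (idop X - R)"
proof -
  have s: "supp_op X R" using assms by (simp add: projector_def)
  have "mmult X (idop X - R) (idop X - R) = idop X - R"
    using assms s
    by (simp add: mmult_diff_left mmult_diff_right mmult_idop_left mmult_idop_right projector_idem)
       (simp add: fun_eq_iff)
  then show ?thesis using s assms by (simp add: projector_def adj_diff projector_adj)
qed

lemma sandwich_diag_eq_inner: assumes "S \<subseteq> X"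
  shows "mmult X (mmult X B \<sigma>) (adj B) S S
     = inner X (\<lambda>U. if U \<subseteq> X then cnj (B S U) else 0) (apply_op X \<sigma> (\<lambda>U. if U \<subseteq> X then cnj (B S U) else 0))"
  using assms by (simp add: mmult_def inner_def apply_op_def adj_def sum_distrib_left sum_distrib_right ac_simps)
    (subst sum.swap, simp add: ac_simps)

lemma trace_sandwich_Re_nonneg: assumes "positive_op X \<sigma>"
  shows "Re (trace X (mmult X (mmult X B \<sigma>) (adj B))) \<ge> 0"
proof -
  have "Re (trace X (mmult X (mmult X B \<sigma>) (adj B))) = (\<Sum>S\<in>Pow X. Re (mmult X (mmult X B \<sigma>) (adj B) S S))"
    by (simp add: trace_def)
  also have "\<dots> \<ge> 0"
    using assms by (intro sum_nonneg) (auto simp: sandwich_diag_eq_inner positive_op_def supp_vec_def)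
  finally show ?thesis .
qed

lemma positive_op_sandwich: assumes "positive_op X \<sigma>"
  shows "positive_op X (mmult X (mmult X B \<sigma>) (adj B))"
  unfolding positive_op_def
proof (intro conjI allI impI)
  fix \<psi> assume "supp_vec X \<psi>"
  have e: "inner X \<psi> (apply_op X (mmult X (mmult X B \<sigma>) (adj B)) \<psi>)
      = inner X (apply_op X (adj B) \<psi>) (apply_op X \<sigma> (apply_op X (adj B) \<psi>))"
    by (simp add: apply_op_mmult inner_adj)
  show "inner X \<psi> (apply_op X (mmult X (mmult X B \<sigma>) (adj B)) \<psi>) \<in> \<real>"
    using assms unfolding e positive_op_def by simp
  show "0 \<le> Re (inner X \<psi> (apply_op X (mmult X (mmult X B \<sigma>) (adj B)) \<psi>))"
    using assms unfolding e positive_op_def by simp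
qed simp

lemma positive_op_outer: "positive_op X (outer X \<psi> \<psi>)"
  unfolding positive_op_def
proof (intro conjI allI impI)
  fix \<phi> assume "supp_vec X \<phi>"
  have "inner X \<phi> (apply_op X (outer X \<psi> \<psi>) \<phi>) = inner X \<phi> \<psi> * inner X \<psi> \<phi>"
    unfolding apply_op_outer by (simp add: inner_def sum_distrib_right mult.assoc)
  also have "\<dots> = inner X \<phi> \<psi> * cnj (inner X \<phi> \<psi>)"
    by (simp add: cnj_inner)
  also have "\<dots> = complex_of_real ((cmod (inner X \<phi> \<psi>))\<^sup>2)"
    by (simp only: complex_norm_square)
  finally have e: "inner X \<phi> (apply_op X (outer X \<psi> \<psi>) \<phi>) = complex_of_real ((cmod (inner X \<phi> \<psi>))\<^sup>2)" .
  show "inner X \<phi> (apply_op X (outer X \<psi> \<psi>) \<phi>) \<in> \<real>" unfolding e by simp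
  show "0 \<le> Re (inner X \<phi> (apply_op X (outer X \<psi> \<psi>) \<phi>))" unfolding e by simp
qed simp

lemma density_outer: "Re (inner X \<psi> \<psi>) \<le> 1 \<Longrightarrow> density X (outer X \<psi> \<psi>)"
  by (simp add: density_def positive_op_outer trace_outer)

definition is_subspace :: "qvar set \<Rightarrow> vec set \<Rightarrow> bool" where
  "is_subspace X U \<longleftrightarrow> (\<forall>u\<in>U. supp_vec X u) \<and> (\<lambda>_. 0) \<in> U \<and>
     (\<forall>u\<in>U. \<forall>v\<in>U. \<forall>a b. (\<lambda>S. a * u S + b * v S) \<in> U)"

lemma is_subspace_lincomb: "is_subspace X U \<Longrightarrow> u \<in> U \<Longrightarrow> v \<in> U \<Longrightarrow> (\<lambda>S. a * u S + b * v S) \<in> U"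
  unfolding is_subspace_def by blast

lemma projector_add_orthogonal_line:
  assumes fin: "finite X" and p: "projector X R" and sw: "supp_vec X w"
    and Rw: "apply_op X R w = (\<lambda>S. 0)" and wne: "w \<noteq> (\<lambda>S. 0)"
  defines "R' \<equiv> (\<lambda>S T. R S T + complex_of_real (1 / Re (inner X w w)) * outer X w w S T)"
  shows "projector X R'" and "trace X R' = trace X R + 1"
proof -
  define c where "c = Re (inner X w w)"
  define k where "k = complex_of_real (1 / c)"
  define Om where "Om = outer X w w"
  have R': "R' = (\<lambda>S T. R S T + k * Om S T)" by (simp add: R'_def k_def c_def Om_def)
  have "c \<noteq> 0" using inner_self_Re_eq_0D[OF fin sw] wne by (auto simp: c_def)
  then have kc: "k * complex_of_real c = 1" by (simp add: k_def)
  have iww: "inner X w w = complex_of_real c" by (simp add: c_def inner_self_real[symmetric])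
  have sR: "supp_op X R" using p by (simp add: projector_def)
  have adjR': "adj R' = R'"
    using projector_adj[OF p] adj_outer[of X w w] by (auto simp: R' adj_def k_def Om_def fun_eq_iff)
  have RO: "mmult X R Om = (\<lambda>S T. 0)" by (simp add: Om_def mmult_outer_left Rw)
  have OR: "mmult X Om R = (\<lambda>S T. 0)"
    using mmult_outer_right[of X w w R] projector_adj[OF p] by (simp add: Om_def Rw)
  have OO: "mmult X Om Om = (\<lambda>S T. complex_of_real c * Om S T)"
    unfolding Om_def mmult_outer_outer iww by (auto simp: outer_def fun_eq_iff)
  have "mmult X R' R' = R'"
    unfolding R'
    by (simp add: mmult_add_left mmult_add_right mmult_scale_left mmult_scale_right RO OR OO
        projector_idem[OF p] fun_eq_iff)
       (metis kc mult.assoc mult.commute)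
  moreover have "supp_op X R'" using sR by (auto simp: R' Om_def supp_op_def outer_def)
  ultimately show "projector X R'" using adjR' by (simp add: projector_def)
  show "trace X R' = trace X R + 1"
    unfolding R' trace_add trace_scale by (simp add: Om_def trace_outer iww kc)
qed

lemma projector_extend_within:
  assumes fin: "finite X" and p: "projector X R" and sub: "is_subspace X U" and rU: "op_range X R \<subseteq> U"
    and uU: "u \<in> U" and ne: "apply_op X R u \<noteq> u"
  shows "\<exists>R'. projector X R' \<and> op_range X R' \<subseteq> U \<and> Re (trace X R') = Re (trace X R) + 1"
proof -
  define w where "w = (\<lambda>S. u S - apply_op X R u S)"
  define R' where "R' = (\<lambda>S T. R S T + complex_of_real (1 / Re (inner X w w)) * outer X w w S T)"
  have su: "supp_vec X u" using sub uU by (simp add: is_subspace_def)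
  have sw: "supp_vec X w" using su by (auto simp: w_def supp_vec_def apply_op_def)
  have Rw: "apply_op X R w = (\<lambda>S. 0)"
    unfolding w_def apply_op_vec_diff apply_op_projector_idem[OF p] by simp
  have wne: "w \<noteq> (\<lambda>S. 0)" using ne by (force simp: w_def fun_eq_iff)
  have wU: "w \<in> U"
  proof -
    have "apply_op X R u \<in> U" using rU su by (auto simp: op_range_def)
    then have "(\<lambda>S. 1 * u S + (-1) * apply_op X R u S) \<in> U" using sub uU by (intro is_subspace_lincomb)
    then show ?thesis by (simp add: w_def)
  qed
  have "op_range X R' \<subseteq> U"
  proof
    fix y assume "y \<in> op_range X R'"
    then obtain x where y: "y = apply_op X R' x" and sx: "supp_vec X x" by (auto simp: op_range_def)
    have Rx: "apply_op X R x \<in> U" using rU sx by (auto simp: op_range_def)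
    have "y = (\<lambda>S. 1 * apply_op X R x S + (complex_of_real (1 / Re (inner X w w)) * inner X w x) * w S)"
      using sw unfolding y R'_def apply_op_add_op apply_op_scale_op
      by (auto simp: apply_op_outer fun_eq_iff supp_vec_def)
    then show "y \<in> U" using Rx wU sub by (simp only: is_subspace_lincomb)
  qed
  then show ?thesis
    using projector_add_orthogonal_line[OF fin p sw Rw wne] by (intro exI[of _ R']) (simp add: R'_def)
qed

lemma projector_diag_Re_le_1: assumes "finite X" "projector X R" "S \<subseteq> X" shows "Re (R S S) \<le> 1"
proof -
  have a: "R U S = cnj (R S U)" for U
  proof -
    have "adj R U S = R U S" using projector_adj[OF assms(2)] by simp
    then show ?thesis by (simp add: adj_def)
  qed
  have "R S S = mmult X R R S S" using assms by (simp add: projector_idem)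
  also have "\<dots> = (\<Sum>U\<in>Pow X. R S U * R U S)" using assms(3) by (simp add: mmult_def)
  also have "\<dots> = (\<Sum>U\<in>Pow X. complex_of_real ((cmod (R S U))\<^sup>2))"
    by (simp only: a complex_norm_square)
  also have "\<dots> = complex_of_real (\<Sum>U\<in>Pow X. (cmod (R S U))\<^sup>2)"
    by (simp only: of_real_sum)
  finally have e: "R S S = complex_of_real (\<Sum>U\<in>Pow X. (cmod (R S U))\<^sup>2)" .
  have "(\<Sum>U\<in>Pow X. (cmod (R S U))\<^sup>2) \<ge> (cmod (R S S))\<^sup>2"
    using assms(1,3) by (intro member_le_sum) auto
  moreover have "(cmod (R S S))\<^sup>2 = (Re (R S S))\<^sup>2" using e by (simp add: cmod_def)
  ultimately have "Re (R S S) \<ge> Re (R S S) * Re (R S S)" using e by (simp add: power2_eq_square)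
  show ?thesis
  proof (rule ccontr)
    assume "\<not> Re (R S S) \<le> 1"
    then have "Re (R S S) * Re (R S S) > Re (R S S) * 1" by (intro mult_strict_left_mono) auto
    with \<open>Re (R S S) \<ge> Re (R S S) * Re (R S S)\<close> show False by simp
  qed
qed

lemma projector_zero: "projector X (\<lambda>S T. 0)"
  by (simp add: projector_def supp_op_def adj_def fun_eq_iff)

lemma projector_trace_Re_le_card: assumes "finite X" "projector X R" shows "Re (trace X R) \<le> real (card (Pow X))"
proof -
  have "Re (trace X R) = (\<Sum>S\<in>Pow X. Re (R S S))" by (simp add: trace_def)
  also have "\<dots> \<le> (\<Sum>S\<in>Pow X. 1)" using assms by (intro sum_mono) (auto intro: projector_diag_Re_le_1)
  finally show ?thesis by simp
qed

lemma projector_onto_exists: assumes fin: "finite X" and sub: "is_subspace X U"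
  shows "\<exists>R. projector X R \<and> op_range X R = U"
proof (rule ccontr)
  assume no: "\<not> ?thesis"
  have "\<exists>R. projector X R \<and> op_range X R \<subseteq> U \<and> Re (trace X R) = real n" for n
  proof (induction n)
    case 0
    have "op_range X (\<lambda>S T. 0) \<subseteq> U" using sub by (auto simp: op_range_def is_subspace_def)
    then show ?case using projector_zero by (intro exI[of _ "\<lambda>S T. 0"]) (simp add: trace_def)
  next
    case (Suc n)
    then obtain R where R: "projector X R" "op_range X R \<subseteq> U" "Re (trace X R) = real n" by blast
    then have "op_range X R \<noteq> U" using no by blast
    then obtain u where "u \<in> U" "u \<notin> op_range X R" using R(2) by blast
    moreover have "supp_vec X u" using sub \<open>u \<in> U\<close> by (simp add: is_subspace_def)
    ultimately have "apply_op X R u \<noteq> u" using op_range_projector[OF R(1)] by auto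
    from projector_extend_within[OF fin R(1) sub R(2) \<open>u \<in> U\<close> this] R(3) show ?case by auto
  qed
  then obtain R where "projector X R" "Re (trace X R) = real (card (Pow X) + 1)" by blast
  with projector_trace_Re_le_card[OF fin this(1)] show False by simp
qed

lemma projector_mmult_same_range:
  assumes fin: "finite X" and p1: "projector X R1" and p2: "projector X R2"
    and r: "op_range X R1 = op_range X R2"
  shows "mmult X R1 R2 = R2"
proof (rule op_eqI_ket[OF fin])
  show "supp_op X (mmult X R1 R2)" by simp
  show "supp_op X R2" using p2 by (simp add: projector_def)
  fix S assume "S \<subseteq> X"
  have "apply_op X R2 (ket S) \<in> op_range X R1" using r by (auto simp: op_range_def supp_vec_ket \<open>S \<subseteq> X\<close>)
  then have "apply_op X R1 (apply_op X R2 (ket S)) = apply_op X R2 (ket S)"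
    using op_range_projector[OF p1] by auto
  then show "apply_op X (mmult X R1 R2) (ket S) = apply_op X R2 (ket S)" by (simp add: apply_op_mmult)
qed

lemma projector_range_unique:
  assumes fin: "finite X" and p1: "projector X R1" and p2: "projector X R2"
    and r: "op_range X R1 = op_range X R2"
  shows "R1 = R2"
proof -
  have "R2 = adj R2" using projector_adj[OF p2] by simp
  also have "\<dots> = adj (mmult X R1 R2)" using projector_mmult_same_range[OF assms] by simp
  also have "\<dots> = mmult X R2 R1" by (simp add: adj_mmult projector_adj[OF p1] projector_adj[OF p2])
  also have "\<dots> = R1" using projector_mmult_same_range[OF fin p2 p1 r[symmetric]] .
  finally show ?thesis by simp
qed

lemma proj_of_spec: assumes "finite X" "is_subspace X U"
  shows "projector X (proj_of X U) \<and> op_range X (proj_of X U) = U"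
proof -
  obtain R where R: "projector X R" "op_range X R = U" using projector_onto_exists[OF assms] by blast
  have "\<exists>!P. projector X P \<and> op_range X P = U"
    using R projector_range_unique[OF assms(1)] by blast
  then show ?thesis unfolding proj_of_def by (rule theI')
qed

lemma proj_of_eq: assumes "finite X" "projector X R" "op_range X R = U"
  shows "proj_of X U = R"
proof -
  have "\<exists>!P. projector X P \<and> op_range X P = U"
    using assms projector_range_unique[OF assms(1)] by blast
  then show ?thesis unfolding proj_of_def using assms by (intro the1_equality) auto
qed

lemma quadratic_nonneg_imp_linear_coeff_0:
  fixes a b :: real
  assumes a0: "0 \<le> a" and b0: "0 \<le> b" and key: "\<And>t. 0 \<le> - 2 * t * a + t * t * b"
  shows "a = 0"
proof (rule ccontr)
  assume "a \<noteq> 0"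
  then have apos: "a > 0" using a0 by simp
  define t where "t = a / (b + 1)"
  have tb: "t * (b + 1) = a" using b0 by (simp add: t_def)
  have "0 \<le> (- 2 * t * a + t * t * b) * (b + 1) * (b + 1)" using key[of t] b0 by simp
  also have "\<dots> = - 2 * a * (t * (b + 1)) * (b + 1) + (t * (b + 1)) * (t * (b + 1)) * b"
    by (simp add: algebra_simps)
  also have "\<dots> = - a * a * (b + 2)" unfolding tb by (simp add: algebra_simps)
  finally have "a * a * (b + 2) \<le> 0" by simp
  moreover have "a * a * (b + 2) > 0" using apos b0 by simp
  ultimately show False by simp
qed

lemma psd_form_eq_0_imp_kernel:
  assumes fin: "finite X" and sB: "supp_op X B" and aB: "adj B = B"
    and pos: "\<And>\<phi>. supp_vec X \<phi> \<Longrightarrow> Re (inner X \<phi> (apply_op X B \<phi>)) \<ge> 0"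
    and s\<psi>: "supp_vec X \<psi>" and z: "Re (inner X \<psi> (apply_op X B \<psi>)) = 0"
  shows "apply_op X B \<psi> = (\<lambda>S. 0)"
proof -
  define v where "v = apply_op X B \<psi>"
  define a where "a = Re (inner X v v)"
  define b where "b = Re (inner X v (apply_op X B v))"
  have sv: "supp_vec X v" by (simp add: v_def)
  have a0: "a \<ge> 0" by (simp add: a_def inner_self_Re_nonneg)
  have b0: "b \<ge> 0" using pos[OF sv] by (simp add: b_def)
  have ipv: "inner X \<psi> (apply_op X B v) = inner X v v"
    by (simp add: inner_adj aB v_def)
  have key: "0 \<le> - 2 * t * a + t * t * b" for t :: real
  proof -
    define x where "x = (\<lambda>S. 1 * \<psi> S + (- complex_of_real t) * v S)"
    have sx: "supp_vec X x" using s\<psi> sv by (auto simp: x_def supp_vec_def)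
    have Bx: "apply_op X B x = (\<lambda>S. 1 * v S + (- complex_of_real t) * apply_op X B v S)"
      unfolding x_def apply_op_lincomb v_def ..
    have eq: "inner X x (apply_op X B x) = inner X \<psi> v - complex_of_real t * inner X v v
        - complex_of_real t * (inner X v v - complex_of_real t * inner X v (apply_op X B v))"
      unfolding Bx unfolding x_def inner_lincomb_left inner_lincomb_right ipv by (simp add: algebra_simps)
    have "Re (inner X x (apply_op X B x)) = Re (inner X \<psi> v - complex_of_real t * inner X v v
        - complex_of_real t * (inner X v v - complex_of_real t * inner X v (apply_op X B v)))"
      by (simp only: eq)
    also have "\<dots> = Re (inner X \<psi> v) - 2 * t * a + t * t * b"
      by (simp add: a_def b_def algebra_simps)
    finally have "Re (inner X x (apply_op X B x)) = Re (inner X \<psi> v) - 2 * t * a + t * t * b" .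
    moreover have "Re (inner X \<psi> v) = 0" using z by (simp add: v_def)
    ultimately show ?thesis using pos[OF sx] by simp
  qed
  have "a = 0" using quadratic_nonneg_imp_linear_coeff_0[OF a0 b0 key] .
  then show ?thesis using inner_self_Re_eq_0D[OF fin sv] by (simp add: a_def v_def)
qed

lemma projector_idop: "finite X \<Longrightarrow> projector X (idop X)"
  by (simp add: projector_def mmult_idop_left)

lemma trace_projector_times_sandwich:
  assumes "projector X Q"
  shows "trace X (mmult X Q (mmult X (mmult X A \<rho>) (adj A)))
       = trace X (mmult X (mmult X (mmult X Q A) \<rho>) (adj (mmult X Q A)))"
proof -
  define M where "M = mmult X (mmult X A \<rho>) (adj A)"
  have e: "mmult X (mmult X (mmult X Q A) \<rho>) (adj (mmult X Q A)) = mmult X (mmult X Q M) Q"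
    by (simp add: M_def adj_mmult projector_adj[OF assms] mmult_assoc)
  have "trace X (mmult X (mmult X Q M) Q) = trace X (mmult X Q (mmult X Q M))"
    by (rule trace_mmult_commute)
  also have "\<dots> = trace X (mmult X (mmult X Q Q) M)"
    by (simp only: mmult_assoc)
  also have "\<dots> = trace X (mmult X Q M)"
    by (simp only: projector_idem[OF assms])
  finally show ?thesis unfolding e M_def by simp
qed

lemma trace_sandwich_projector:
  assumes "projector X P" shows "trace X (mmult X (mmult X P \<rho>) (adj P)) = trace X (mmult X P \<rho>)"
proof -
  have "trace X (mmult X (mmult X P \<rho>) (adj P)) = trace X (mmult X (adj P) (mmult X P \<rho>))"
    by (rule trace_mmult_commute)
  also have "\<dots> = trace X (mmult X (mmult X P P) \<rho>)"
    by (simp only: projector_adj[OF assms] mmult_assoc)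
  finally show ?thesis by (simp only: projector_idem[OF assms])
qed

lemma inner_self_projector_split:
  assumes "finite X" "projector X Q" "supp_vec X x"
  shows "Re (inner X x x) = Re (inner X (apply_op X Q x) (apply_op X Q x))
     + Re (inner X (\<lambda>S. x S - apply_op X Q x S) (\<lambda>S. x S - apply_op X Q x S))"
proof -
  have a: "inner X x (apply_op X Q x) = inner X (apply_op X Q x) (apply_op X Q x)"
    using inner_projector[OF assms(2)] by simp
  have b: "inner X (apply_op X Q x) x = inner X (apply_op X Q x) (apply_op X Q x)"
    using a cnj_inner[of X x "apply_op X Q x"] inner_self_real[of X "apply_op X Q x"]
    by (metis complex_cnj_complex_of_real)
  show ?thesis by (simp add: inner_diff_left inner_diff_right a b)
qed

section \<open>Extension to a larger system\<close>

definition block_op :: "qvar set \<Rightarrow> qvar set \<Rightarrow> qvar set \<Rightarrow> op \<Rightarrow> op" where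
  "block_op V a b \<rho> = (\<lambda>S' T'. if S' \<subseteq> V \<and> T' \<subseteq> V then \<rho> (S' \<union> a) (T' \<union> b) else 0)"

definition block_vec :: "qvar set \<Rightarrow> qvar set \<Rightarrow> vec \<Rightarrow> vec" where
  "block_vec V a \<psi> = (\<lambda>s. if s \<subseteq> V then \<psi> (s \<union> a) else 0)"

lemma ext_so_block_op: "ext_so V X E \<rho> = (\<lambda>S T. if S \<subseteq> X \<and> T \<subseteq> X then E (block_op V (S - V) (T - V) \<rho>) (S \<inter> V) (T \<inter> V) else 0)"
  unfolding ext_so_def block_op_def by (rule refl)

lemma sum_Pow_fiber:
  assumes "finite X" "V \<subseteq> X" "a \<subseteq> X" "a \<inter> V = {}"
  shows "(\<Sum>U\<in>Pow X. if U - V = a then g U else 0) = (\<Sum>u\<in>Pow V. g (u \<union> a))"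
proof -
  have "(\<Sum>U\<in>Pow X. if U - V = a then g U else 0) = (\<Sum>U\<in>{U\<in>Pow X. U - V = a}. g U)"
    using assms(1) sum.inter_filter[of "Pow X" g "\<lambda>U. U - V = a"] by simp
  also have "\<dots> = (\<Sum>u\<in>Pow V. g (u \<union> a))"
    by (rule sum.reindex_bij_witness[where i="\<lambda>u. u \<union> a" and j="\<lambda>U. U \<inter> V"]) (use assms in \<open>auto simp: Int_Diff_Un\<close>)
  finally show ?thesis .
qed

lemma sum_Pow_split:
  assumes "finite X" "V \<subseteq> X"
  shows "(\<Sum>S\<in>Pow X. g S) = (\<Sum>a\<in>Pow (X - V). \<Sum>s\<in>Pow V. g (s \<union> a))"
proof -
  have "(\<Sum>a\<in>Pow (X - V). \<Sum>s\<in>Pow V. g (s \<union> a)) = (\<Sum>(a, s)\<in>Pow (X - V) \<times> Pow V. g (s \<union> a))"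
    by (rule sum.cartesian_product)
  also have "\<dots> = (\<Sum>S\<in>Pow X. g S)"
    by (rule sum.reindex_bij_witness[where i="\<lambda>S. (S - V, S \<inter> V)" and j="\<lambda>(a, s). s \<union> a"])
       (use assms in auto)
  finally show ?thesis by simp
qed

lemma sum_ext_op_left:
  assumes "finite X" "V \<subseteq> X" "S \<subseteq> X"
  shows "(\<Sum>U\<in>Pow X. ext_op V X K S U * f U) = (\<Sum>u\<in>Pow V. K (S \<inter> V) u * f (u \<union> (S - V)))"
proof -
  have "(\<Sum>U\<in>Pow X. ext_op V X K S U * f U) = (\<Sum>U\<in>Pow X. if U - V = S - V then K (S \<inter> V) (U \<inter> V) * f U else 0)"
    using assms by (intro sum.cong) (auto simp: ext_op_def)
  also have "\<dots> = (\<Sum>u\<in>Pow V. K (S \<inter> V) ((u \<union> (S - V)) \<inter> V) * f (u \<union> (S - V)))"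
    using assms by (intro sum_Pow_fiber) auto
  also have "\<dots> = (\<Sum>u\<in>Pow V. K (S \<inter> V) u * f (u \<union> (S - V)))"
  proof (intro sum.cong refl)
    fix u assume "u \<in> Pow V" then have "(u \<union> (S - V)) \<inter> V = u" by auto
    then show "K (S \<inter> V) ((u \<union> (S - V)) \<inter> V) * f (u \<union> (S - V)) = K (S \<inter> V) u * f (u \<union> (S - V))" by simp
  qed
  finally show ?thesis .
qed

lemma sum_ext_op_right:
  assumes "finite X" "V \<subseteq> X" "T \<subseteq> X"
  shows "(\<Sum>U\<in>Pow X. f U * ext_op V X K U T) = (\<Sum>u\<in>Pow V. f (u \<union> (T - V)) * K u (T \<inter> V))"
proof -
  have "(\<Sum>U\<in>Pow X. f U * ext_op V X K U T) = (\<Sum>U\<in>Pow X. if U - V = T - V then f U * K (U \<inter> V) (T \<inter> V) else 0)"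
    using assms by (intro sum.cong) (auto simp: ext_op_def)
  also have "\<dots> = (\<Sum>u\<in>Pow V. f (u \<union> (T - V)) * K ((u \<union> (T - V)) \<inter> V) (T \<inter> V))"
    using assms by (intro sum_Pow_fiber) auto
  also have "\<dots> = (\<Sum>u\<in>Pow V. f (u \<union> (T - V)) * K u (T \<inter> V))"
  proof (intro sum.cong refl)
    fix u assume "u \<in> Pow V" then have "(u \<union> (T - V)) \<inter> V = u" by auto
    then show "f (u \<union> (T - V)) * K ((u \<union> (T - V)) \<inter> V) (T \<inter> V) = f (u \<union> (T - V)) * K u (T \<inter> V)" by simp
  qed
  finally show ?thesis .
qed

lemma supp_op_ext_op[simp]: "supp_op X (ext_op V X A)"
  by (simp add: supp_op_def ext_op_def)

lemma apply_op_ext_op: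
  assumes "finite X" "V \<subseteq> X"
  shows "apply_op X (ext_op V X A) \<psi> = (\<lambda>S. if S \<subseteq> X then apply_op V A (block_vec V (S - V) \<psi>) (S \<inter> V) else 0)"
proof (intro ext)
  fix S show "apply_op X (ext_op V X A) \<psi> S = (if S \<subseteq> X then apply_op V A (block_vec V (S - V) \<psi>) (S \<inter> V) else 0)"
  proof (cases "S \<subseteq> X")
    case True
    then show ?thesis using assms
      by (simp add: apply_op_def sum_ext_op_left block_vec_def)
  qed (simp add: apply_op_def)
qed

lemma block_vec_apply_ext_op:
  assumes "finite X" "V \<subseteq> X" "a \<subseteq> X - V"
  shows "block_vec V a (apply_op X (ext_op V X A) \<psi>) = apply_op V A (block_vec V a \<psi>)"
proof (intro ext)
  fix s show "block_vec V a (apply_op X (ext_op V X A) \<psi>) s = apply_op V A (block_vec V a \<psi>) s"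
  proof (cases "s \<subseteq> V")
    case True
    have e1: "(s \<union> a) - V = a" "(s \<union> a) \<inter> V = s" using True assms(3) by auto
    have "s \<union> a \<subseteq> X" using True assms by auto
    then show ?thesis using True by (simp add: block_vec_def apply_op_ext_op[OF assms(1,2)] e1)
  qed (simp add: block_vec_def apply_op_def)
qed

lemma vec_eqI_blocks:
  assumes "V \<subseteq> X" "supp_vec X \<psi>" "supp_vec X \<phi>" "\<And>a. a \<subseteq> X - V \<Longrightarrow> block_vec V a \<psi> = block_vec V a \<phi>"
  shows "\<psi> = \<phi>"
proof (intro ext)
  fix S show "\<psi> S = \<phi> S"
  proof (cases "S \<subseteq> X")
    case True
    have "S - V \<subseteq> X - V" using True by auto
    then have "block_vec V (S - V) \<psi> = block_vec V (S - V) \<phi>" by (rule assms(4))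
    then have "block_vec V (S - V) \<psi> (S \<inter> V) = block_vec V (S - V) \<phi> (S \<inter> V)" by simp
    moreover have "S \<inter> V \<union> (S - V) = S" by auto
    ultimately show ?thesis by (simp add: block_vec_def)
  qed (use assms(2,3) in \<open>auto simp: supp_vec_def\<close>)
qed

lemma mmult_ext_op:
  assumes "finite X" "V \<subseteq> X"
  shows "mmult X (ext_op V X A) (ext_op V X B) = ext_op V X (mmult V A B)"
proof (intro ext)
  fix S T
  show "mmult X (ext_op V X A) (ext_op V X B) S T = ext_op V X (mmult V A B) S T"
  proof (cases "S \<subseteq> X \<and> T \<subseteq> X")
    case True
    have "mmult X (ext_op V X A) (ext_op V X B) S T = (\<Sum>u\<in>Pow V. A (S \<inter> V) u * ext_op V X B (u \<union> (S - V)) T)"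
      using True assms by (simp add: mmult_def sum_ext_op_left)
    also have "\<dots> = (\<Sum>u\<in>Pow V. A (S \<inter> V) u * (B u (T \<inter> V) * (if S - V = T - V then 1 else 0)))"
    proof (intro sum.cong refl)
      fix u assume "u \<in> Pow V"
      then have h: "(u \<union> (S - V)) \<inter> V = u" "(u \<union> (S - V)) - V = S - V" "u \<union> (S - V) \<subseteq> X"
        using True assms by auto
      show "A (S \<inter> V) u * ext_op V X B (u \<union> (S - V)) T = A (S \<inter> V) u * (B u (T \<inter> V) * (if S - V = T - V then 1 else 0))"
        unfolding ext_op_def h using True h(3) by simp
    qed
    also have "\<dots> = ext_op V X (mmult V A B) S T"
      using True by (simp add: ext_op_def mmult_def sum_distrib_right ac_simps)
    finally show ?thesis .
  qed (auto simp: mmult_def ext_op_def)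
qed

lemma adj_ext_op: "adj (ext_op V X A) = ext_op V X (adj A)"
  by (auto simp: adj_def ext_op_def fun_eq_iff)

lemma ext_op_ext_op:
  assumes "V \<subseteq> W" "W \<subseteq> X"
  shows "ext_op W X (ext_op V W K) = ext_op V X K"
proof (intro ext)
  fix S T
  have a: "S \<inter> W \<inter> V = S \<inter> V" "T \<inter> W \<inter> V = T \<inter> V" using assms by auto
  have b: "(S \<inter> W - V = T \<inter> W - V \<and> S - W = T - W) \<longleftrightarrow> S - V = T - V" using assms by blast
  show "ext_op W X (ext_op V W K) S T = ext_op V X K S T"
    using assms a b by (auto simp: ext_op_def)
qed

lemma ext_op_idop: "ext_op V X (idop V) = idop X"
proof (intro ext)
  fix S T
  have "(S \<inter> V = T \<inter> V \<and> S - V = T - V) \<longleftrightarrow> S = T" by blast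
  then show "ext_op V X (idop V) S T = idop X S T" by (auto simp: ext_op_def idop_def)
qed

lemma ext_op_diff: "ext_op V X (A - B) = ext_op V X A - ext_op V X B"
  by (auto simp: ext_op_def fun_eq_iff algebra_simps)

lemma ext_op_self: "supp_op V A \<Longrightarrow> ext_op V V A = A"
  by (auto simp: ext_op_def fun_eq_iff supp_op_def Int_absorb2)

lemma ext_op_zero[simp]: "ext_op V X (\<lambda>S T. 0) = (\<lambda>S T. 0)"
  by (auto simp: ext_op_def fun_eq_iff)

lemma ext_op_lincomb: "ext_op V X (\<lambda>S T. \<Sum>K\<in>F. c K * K S T) = (\<lambda>S T. \<Sum>K\<in>F. c K * ext_op V X K S T)"
proof (intro ext)
  fix S T show "ext_op V X (\<lambda>S T. \<Sum>K\<in>F. c K * K S T) S T = (\<Sum>K\<in>F. c K * ext_op V X K S T)"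
  proof (cases "S \<subseteq> X \<and> T \<subseteq> X")
    case False
    then have c: "(S \<subseteq> X \<and> T \<subseteq> X) = False" by simp
    show ?thesis by (simp only: ext_op_def c if_False mult_zero_right sum.neutral_const)
  qed (simp_all add: ext_op_def sum_distrib_right ac_simps)
qed

lemma sandwich_ext_op_entry:
  assumes "finite X" "V \<subseteq> X" "S \<subseteq> X" "T \<subseteq> X"
  shows "mmult X (mmult X (ext_op V X K) \<rho>) (adj (ext_op V X K)) S T
       = mmult V (mmult V K (block_op V (S - V) (T - V) \<rho>)) (adj K) (S \<inter> V) (T \<inter> V)"
proof -
  have "mmult X (mmult X (ext_op V X K) \<rho>) (adj (ext_op V X K)) S T
      = (\<Sum>U'\<in>Pow X. (\<Sum>U\<in>Pow X. ext_op V X K S U * \<rho> U U') * cnj (ext_op V X K T U'))"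
    using assms by (simp add: mmult_def adj_def)
  also have "\<dots> = (\<Sum>U'\<in>Pow X. (\<Sum>u\<in>Pow V. K (S \<inter> V) u * \<rho> (u \<union> (S - V)) U') * cnj (ext_op V X K T U'))"
    using assms by (simp add: sum_ext_op_left)
  also have "\<dots> = (\<Sum>U'\<in>Pow X. (\<Sum>u\<in>Pow V. K (S \<inter> V) u * \<rho> (u \<union> (S - V)) U') * adj (ext_op V X K) U' T)"
    by (simp add: adj_def)
  also have "\<dots> = (\<Sum>u'\<in>Pow V. (\<Sum>u\<in>Pow V. K (S \<inter> V) u * \<rho> (u \<union> (S - V)) (u' \<union> (T - V))) * adj K u' (T \<inter> V))"
    using assms by (simp add: adj_ext_op sum_ext_op_right)
  also have "\<dots> = mmult V (mmult V K (block_op V (S - V) (T - V) \<rho>)) (adj K) (S \<inter> V) (T \<inter> V)"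
    by (simp add: mmult_def block_op_def)
  finally show ?thesis .
qed

lemma ext_so_kraus:
  assumes "finite X" "V \<subseteq> X" "kraus_rep V Ks E"
  shows "ext_so V X E \<rho> = (\<lambda>S T. \<Sum>K\<leftarrow>Ks. mmult X (mmult X (ext_op V X K) \<rho>) (adj (ext_op V X K)) S T)"
proof (intro ext)
  fix S T
  have E: "E = (\<lambda>\<rho> S T. \<Sum>K\<leftarrow>Ks. mmult V (mmult V K \<rho>) (adj K) S T)" using assms(3) by (simp add: kraus_rep_def)
  show "ext_so V X E \<rho> S T = (\<Sum>K\<leftarrow>Ks. mmult X (mmult X (ext_op V X K) \<rho>) (adj (ext_op V X K)) S T)"
  proof (cases "S \<subseteq> X \<and> T \<subseteq> X")
    case True
    then show ?thesis using assms(1,2) by (simp add: ext_so_block_op E sandwich_ext_op_entry)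
  next
    case False
    then have c: "(S \<subseteq> X \<and> T \<subseteq> X) = False" by simp
    show ?thesis by (simp only: ext_so_block_op mmult_def c if_False sum_list_0)
  qed
qed

lemma trace_ext_so_blocks:
  assumes "finite X" "V \<subseteq> X"
  shows "trace X (ext_so V X E \<rho>) = (\<Sum>a\<in>Pow (X - V). trace V (E (block_op V a a \<rho>)))"
proof -
  have "trace X (ext_so V X E \<rho>) = (\<Sum>S\<in>Pow X. E (block_op V (S - V) (S - V) \<rho>) (S \<inter> V) (S \<inter> V))"
    by (simp add: trace_def ext_so_block_op)
  also have "\<dots> = (\<Sum>a\<in>Pow (X - V). \<Sum>s\<in>Pow V. E (block_op V ((s \<union> a) - V) ((s \<union> a) - V) \<rho>) ((s \<union> a) \<inter> V) ((s \<union> a) \<inter> V))"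
    by (rule sum_Pow_split[OF assms])
  also have "\<dots> = (\<Sum>a\<in>Pow (X - V). trace V (E (block_op V a a \<rho>)))"
    unfolding trace_def
  proof (intro sum.cong refl)
    fix a s assume "a \<in> Pow (X - V)" "s \<in> Pow V"
    then have "(s \<union> a) - V = a" "(s \<union> a) \<inter> V = s" by auto
    then show "E (block_op V ((s \<union> a) - V) ((s \<union> a) - V) \<rho>) ((s \<union> a) \<inter> V) ((s \<union> a) \<inter> V) = E (block_op V a a \<rho>) s s" by simp
  qed
  finally show ?thesis .
qed

lemma trace_blocks:
  assumes "finite X" "V \<subseteq> X"
  shows "trace X \<rho> = (\<Sum>a\<in>Pow (X - V). trace V (block_op V a a \<rho>))"
proof -
  have "trace X \<rho> = (\<Sum>a\<in>Pow (X - V). \<Sum>s\<in>Pow V. \<rho> (s \<union> a) (s \<union> a))"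
    unfolding trace_def by (rule sum_Pow_split[OF assms])
  also have "\<dots> = (\<Sum>a\<in>Pow (X - V). trace V (block_op V a a \<rho>))"
    by (simp add: trace_def block_op_def)
  finally show ?thesis .
qed

definition lift_vec :: "qvar set \<Rightarrow> qvar set \<Rightarrow> qvar set \<Rightarrow> vec \<Rightarrow> vec" where
  "lift_vec V X a \<phi> = (\<lambda>S. if S \<subseteq> X \<and> S - V = a then \<phi> (S \<inter> V) else 0)"

lemma inner_lift_vec:
  assumes "finite X" "V \<subseteq> X" "a \<subseteq> X - V"
  shows "inner X (lift_vec V X a \<phi>) w = inner V \<phi> (block_vec V a w)"
proof -
  have "inner X (lift_vec V X a \<phi>) w = (\<Sum>S\<in>Pow X. if S - V = a then cnj (\<phi> (S \<inter> V)) * w S else 0)"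
    unfolding inner_def lift_vec_def by (intro sum.cong) auto
  also have "\<dots> = (\<Sum>s\<in>Pow V. cnj (\<phi> ((s \<union> a) \<inter> V)) * w (s \<union> a))"
    using assms by (intro sum_Pow_fiber) auto
  also have "\<dots> = inner V \<phi> (block_vec V a w)"
    unfolding inner_def block_vec_def
  proof (intro sum.cong refl)
    fix s assume "s \<in> Pow V" then have "(s \<union> a) \<inter> V = s" using assms by auto
    then show "cnj (\<phi> ((s \<union> a) \<inter> V)) * w (s \<union> a) = cnj (\<phi> s) * (if s \<subseteq> V then w (s \<union> a) else 0)"
      using \<open>s \<in> Pow V\<close> by simp
  qed
  finally show ?thesis .
qed

lemma block_vec_apply_lift:
  assumes "finite X" "V \<subseteq> X" "a \<subseteq> X - V"
  shows "block_vec V a (apply_op X \<sigma> (lift_vec V X a \<phi>)) = apply_op V (block_op V a a \<sigma>) \<phi>"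
proof (intro ext)
  fix s show "block_vec V a (apply_op X \<sigma> (lift_vec V X a \<phi>)) s = apply_op V (block_op V a a \<sigma>) \<phi> s"
  proof (cases "s \<subseteq> V")
    case True
    then have sX: "s \<union> a \<subseteq> X" using assms by auto
    have "block_vec V a (apply_op X \<sigma> (lift_vec V X a \<phi>)) s = (\<Sum>T\<in>Pow X. if T - V = a then \<sigma> (s \<union> a) T * \<phi> (T \<inter> V) else 0)"
      using True sX unfolding block_vec_def apply_op_def lift_vec_def by (auto intro!: sum.cong)
    also have "\<dots> = (\<Sum>t\<in>Pow V. \<sigma> (s \<union> a) (t \<union> a) * \<phi> ((t \<union> a) \<inter> V))"
      using assms by (intro sum_Pow_fiber) auto
    also have "\<dots> = apply_op V (block_op V a a \<sigma>) \<phi> s"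
    proof -
      have d: "a \<inter> V = {}" using assms by auto
      show ?thesis unfolding apply_op_def block_op_def using True d by (auto intro!: sum.cong simp: Int_Un_distrib2 Int_absorb2)
    qed
    finally show ?thesis .
  qed (simp add: block_vec_def apply_op_def)
qed

lemma supp_vec_lift_vec: "supp_vec X (lift_vec V X a \<phi>)"
  by (simp add: supp_vec_def lift_vec_def)

lemma positive_op_block_op:
  assumes "finite X" "V \<subseteq> X" "a \<subseteq> X - V" "positive_op X \<sigma>"
  shows "positive_op V (block_op V a a \<sigma>)"
  unfolding positive_op_def
proof (intro conjI allI impI)
  show "supp_op V (block_op V a a \<sigma>)" by (simp add: supp_op_def block_op_def)
  fix \<phi> assume s\<phi>: "supp_vec V \<phi>"
  have e: "inner V \<phi> (apply_op V (block_op V a a \<sigma>) \<phi>) = inner X (lift_vec V X a \<phi>) (apply_op X \<sigma> (lift_vec V X a \<phi>))"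
    using assms by (simp add: inner_lift_vec block_vec_apply_lift)
  show "inner V \<phi> (apply_op V (block_op V a a \<sigma>) \<phi>) \<in> \<real>" unfolding e using assms(4) supp_vec_lift_vec
    by (simp add: positive_op_def)
  show "0 \<le> Re (inner V \<phi> (apply_op V (block_op V a a \<sigma>) \<phi>))" unfolding e using assms(4) supp_vec_lift_vec
    by (simp add: positive_op_def)
qed

lemma trace_ext_so_le:
  assumes "finite X" "V \<subseteq> X" "dprog V E" "positive_op X \<sigma>"
  shows "Re (trace X (ext_so V X E \<sigma>)) \<le> Re (trace X \<sigma>)"
proof -
  have "Re (trace X (ext_so V X E \<sigma>)) = (\<Sum>a\<in>Pow (X - V). Re (trace V (E (block_op V a a \<sigma>))))"
    using assms by (simp add: trace_ext_so_blocks)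
  also have "\<dots> \<le> (\<Sum>a\<in>Pow (X - V). Re (trace V (block_op V a a \<sigma>)))"
    using assms positive_op_block_op by (intro sum_mono) (auto simp: dprog_def)
  also have "\<dots> = Re (trace X \<sigma>)" using assms by (simp add: trace_blocks)
  finally show ?thesis .
qed

lemma projector_ext_op:
  assumes "finite X" "W \<subseteq> X" "projector W P"
  shows "projector X (ext_op W X P)"
  using assms by (simp add: projector_def adj_ext_op mmult_ext_op)

lemma trace_projector_ext_so_Re_nonneg:
  assumes "finite X" "V \<subseteq> X" "kraus_rep V Ks E" "projector X Q" "positive_op X \<rho>"
  shows "Re (trace X (mmult X Q (ext_so V X E \<rho>))) \<ge> 0"
proof -
  have "trace X (mmult X Q (ext_so V X E \<rho>)) =
     (\<Sum>K\<leftarrow>Ks. trace X (mmult X Q (mmult X (mmult X (ext_op V X K) \<rho>) (adj (ext_op V X K)))))"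
    by (simp only: ext_so_kraus[OF assms(1,2,3)] mmult_sum_list_right trace_sum_list)
  also have "\<dots> = (\<Sum>K\<leftarrow>Ks. trace X (mmult X (mmult X (mmult X Q (ext_op V X K)) \<rho>) (adj (mmult X Q (ext_op V X K)))))"
    by (simp only: trace_projector_times_sandwich[OF assms(4)])
  finally have "Re (trace X (mmult X Q (ext_so V X E \<rho>))) =
     (\<Sum>K\<leftarrow>Ks. Re (trace X (mmult X (mmult X (mmult X Q (ext_op V X K)) \<rho>) (adj (mmult X Q (ext_op V X K))))))"
    by (simp only: Re_sum_list)
  also have "\<dots> \<ge> 0" using assms(5) by (intro sum_list_nonneg) (auto simp: trace_sandwich_Re_nonneg)
  finally show ?thesis .
qed

lemma supp_op_ext_so[simp]: "supp_op X (ext_so V X E \<rho>)"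
  by (simp add: supp_op_def ext_so_def)

lemma trace_projector_ext_so_outer:
  assumes "finite X" "V \<subseteq> X" "kraus_rep V Ks E" "projector X Q"
  shows "trace X (mmult X Q (ext_so V X E (outer X \<psi> \<psi>)))
    = (\<Sum>K\<leftarrow>Ks. inner X (apply_op X Q (apply_op X (ext_op V X K) \<psi>)) (apply_op X Q (apply_op X (ext_op V X K) \<psi>)))"
proof -
  have "trace X (mmult X Q (ext_so V X E (outer X \<psi> \<psi>))) =
     (\<Sum>K\<leftarrow>Ks. trace X (mmult X Q (mmult X (mmult X (ext_op V X K) (outer X \<psi> \<psi>)) (adj (ext_op V X K)))))"
    by (simp only: ext_so_kraus[OF assms(1,2,3)] mmult_sum_list_right trace_sum_list)
  also have "\<dots> = (\<Sum>K\<leftarrow>Ks. trace X (mmult X (mmult X (mmult X Q (ext_op V X K)) (outer X \<psi> \<psi>)) (adj (mmult X Q (ext_op V X K)))))"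
    by (simp only: trace_projector_times_sandwich[OF assms(4)])
  also have "\<dots> = (\<Sum>K\<leftarrow>Ks. inner X (apply_op X Q (apply_op X (ext_op V X K) \<psi>)) (apply_op X Q (apply_op X (ext_op V X K) \<psi>)))"
    by (simp add: mmult_outer_left mmult_outer_right trace_outer apply_op_mmult)
  finally show ?thesis .
qed

lemma trace_ext_so_outer:
  assumes "finite X" "V \<subseteq> X" "kraus_rep V Ks E"
  shows "trace X (ext_so V X E (outer X \<psi> \<psi>))
    = (\<Sum>K\<leftarrow>Ks. inner X (apply_op X (ext_op V X K) \<psi>) (apply_op X (ext_op V X K) \<psi>))"
  using trace_projector_ext_so_outer[OF assms projector_idop[OF assms(1)], of \<psi>] assms(1)
  by (simp add: mmult_idop_left apply_op_idop)

lemma block_op_outer: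
  assumes "V \<subseteq> X" "a \<subseteq> X - V"
  shows "block_op V a a (outer X \<psi> \<psi>) = outer V (block_vec V a \<psi>) (block_vec V a \<psi>)"
proof (intro ext)
  fix S T
  show "block_op V a a (outer X \<psi> \<psi>) S T = outer V (block_vec V a \<psi>) (block_vec V a \<psi>) S T"
  proof (cases "S \<subseteq> V \<and> T \<subseteq> V")
    case True then have "S \<union> a \<subseteq> X" "T \<union> a \<subseteq> X" using assms by auto
    then show ?thesis using True by (simp add: block_op_def outer_def block_vec_def)
  qed (auto simp: block_op_def outer_def)
qed

lemma supp_vec_block_vec: "supp_vec V (block_vec V a \<psi>)"
  by (simp add: supp_vec_def block_vec_def)

lemma block_vec_scale: "block_vec V a (\<lambda>S. c * \<psi> S) = (\<lambda>s. c * block_vec V a \<psi> s)"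
  by (simp add: block_vec_def fun_eq_iff)

lemma ext_op_add: "ext_op V X (\<lambda>S T. A S T + B S T) = (\<lambda>S T. ext_op V X A S T + ext_op V X B S T)"
  by (auto simp: ext_op_def fun_eq_iff algebra_simps)

lemma ext_op_sum_list: "ext_op V X (\<lambda>S T. \<Sum>K\<leftarrow>Ks. f K S T) = (\<lambda>S T. \<Sum>K\<leftarrow>Ks. ext_op V X (f K) S T)"
proof (induction Ks)
  case (Cons a Ks)
  have "(\<lambda>S T. \<Sum>K\<leftarrow>a # Ks. f K S T) = (\<lambda>S T. f a S T + (\<lambda>S T. \<Sum>K\<leftarrow>Ks. f K S T) S T)" by simp
  then show ?case using Cons by (simp only: ext_op_add) simp
qed simp

lemma ext_op_scale: "ext_op V X (\<lambda>S T. c * A S T) = (\<lambda>S T. c * ext_op V X A S T)"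
  by (auto simp: ext_op_def fun_eq_iff)

section \<open>Kraus representations\<close>

lemma kraus_rep_supp_op: "kraus_rep V Ks E \<Longrightarrow> K \<in> set Ks \<Longrightarrow> supp_op V K"
  by (simp add: kraus_rep_def)

definition kraus_effect :: "qvar set \<Rightarrow> op list \<Rightarrow> op" where
  "kraus_effect V Ks = (\<lambda>S T. \<Sum>K\<leftarrow>Ks. mmult V (adj K) K S T)"

lemma inner_kraus_effect: "inner X \<phi> (apply_op X (kraus_effect X Ks) \<phi>) = (\<Sum>K\<leftarrow>Ks. inner X (apply_op X K \<phi>) (apply_op X K \<phi>))"
  unfolding kraus_effect_def apply_op_sum_list inner_sum_list
  by (simp add: apply_op_mmult inner_adj)

lemma ext_so_self:
  assumes "finite V" "kraus_rep V Ks E" shows "ext_so V V E \<rho> = E \<rho>"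
proof -
  have s: "\<And>K. K \<in> set Ks \<Longrightarrow> ext_op V V K = K" using assms(2) by (auto simp: kraus_rep_def ext_op_self)
  have "ext_so V V E \<rho> = (\<lambda>S T. \<Sum>K\<leftarrow>Ks. mmult V (mmult V K \<rho>) (adj K) S T)"
    unfolding ext_so_kraus[OF assms(1) subset_refl assms(2)]
    by (intro ext arg_cong[where f=sum_list] map_cong) (simp_all add: s)
  also have "\<dots> = E \<rho>" using assms(2) by (simp add: kraus_rep_def)
  finally show ?thesis .
qed

lemma trace_kraus_outer:
  assumes "finite V" "kraus_rep V Ks E"
  shows "trace V (E (outer V \<phi> \<phi>)) = (\<Sum>K\<leftarrow>Ks. inner V (apply_op V K \<phi>) (apply_op V K \<phi>))"
proof -
  have s: "\<And>K. K \<in> set Ks \<Longrightarrow> ext_op V V K = K" using assms(2) by (auto simp: kraus_rep_def ext_op_self)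
  show ?thesis
    using trace_ext_so_outer[OF assms(1) subset_refl assms(2), of \<phi>] ext_so_self[OF assms] s
    by (simp cong: map_cong)
qed

lemma trace_kraus_outer_eq_inner_effect:
  assumes "finite V" "kraus_rep V Ks E"
  shows "trace V (E (outer V \<phi> \<phi>)) = inner V \<phi> (apply_op V (kraus_effect V Ks) \<phi>)"
  by (simp add: trace_kraus_outer[OF assms] inner_kraus_effect)

lemma adj_kraus_effect: "adj (kraus_effect V Ks) = kraus_effect V Ks"
proof -
  have "adj (kraus_effect V Ks) = (\<lambda>S T. \<Sum>K\<leftarrow>Ks. adj (mmult V (adj K) K) S T)"
    by (induction Ks) (simp_all add: adj_def kraus_effect_def fun_eq_iff)
  then show ?thesis by (simp add: adj_mmult kraus_effect_def)
qed

lemma supp_op_kraus_effect: "supp_op V (kraus_effect V Ks)"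
  by (induction Ks) (simp_all add: kraus_effect_def supp_op_def mmult_def)

lemma term_space_kraus_iff:
  assumes fV: "finite V" and dp: "dprog V E" and Ks: "kraus_rep V Ks E"
  shows "\<phi> \<in> term_space V E \<longleftrightarrow> supp_vec V \<phi> \<and> apply_op V (idop V - kraus_effect V Ks) \<phi> = (\<lambda>S. 0)"
proof -
  define B where "B = idop V - kraus_effect V Ks"
  have sB: "supp_op V B" by (simp add: B_def supp_op_kraus_effect)
  have aB: "adj B = B" by (simp add: B_def adj_diff adj_kraus_effect)
  have iB: "inner V x (apply_op V B x) = trace V (outer V x x) - trace V (E (outer V x x))" if "supp_vec V x" for x
    using that fV by (simp add: B_def apply_op_diff inner_diff_right apply_op_idop trace_outer trace_kraus_outer_eq_inner_effect[OF fV Ks])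
  have pos: "Re (inner V x (apply_op V B x)) \<ge> 0" if "supp_vec V x" for x
    using dp positive_op_outer[of V x] iB[OF that] by (simp add: dprog_def)
  show ?thesis
  proof
    assume "\<phi> \<in> term_space V E"
    then have s: "supp_vec V \<phi>" and "trace V (E (outer V \<phi> \<phi>)) = trace V (outer V \<phi> \<phi>)"
      by (auto simp: term_space_def)
    then have "Re (inner V \<phi> (apply_op V B \<phi>)) = 0" using iB by simp
    then show "supp_vec V \<phi> \<and> apply_op V (idop V - kraus_effect V Ks) \<phi> = (\<lambda>S. 0)"
      using psd_form_eq_0_imp_kernel[OF fV sB aB pos s] s by (simp add: B_def)
  next
    assume h: "supp_vec V \<phi> \<and> apply_op V (idop V - kraus_effect V Ks) \<phi> = (\<lambda>S. 0)"
    then have "inner V \<phi> (apply_op V B \<phi>) = 0" by (simp add: B_def)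
    then show "\<phi> \<in> term_space V E" using iB h by (simp add: term_space_def)
  qed
qed

lemma trace_ext_so_kraus_effect:
  assumes fin: "finite X" and VX: "V \<subseteq> X" and Ls: "kraus_rep V Ls F"
  shows "trace X (ext_so V X F \<tau>) = trace X (mmult X (ext_op V X (kraus_effect V Ls)) \<tau>)"
proof -
  have "trace X (ext_so V X F \<tau>) = (\<Sum>L\<leftarrow>Ls. trace X (mmult X (mmult X (ext_op V X L) \<tau>) (adj (ext_op V X L))))"
    by (simp only: ext_so_kraus[OF fin VX Ls] trace_sum_list)
  also have "\<dots> = (\<Sum>L\<leftarrow>Ls. trace X (mmult X (mmult X (adj (ext_op V X L)) (ext_op V X L)) \<tau>))"
    by (simp only: trace_sandwich_cyclic)
  also have "\<dots> = trace X (mmult X (ext_op V X (kraus_effect V Ls)) \<tau>)"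
    by (simp only: kraus_effect_def ext_op_sum_list mmult_ext_op[OF fin VX, symmetric] adj_ext_op[symmetric]
        mmult_sum_list_left trace_sum_list)
  finally show ?thesis .
qed

section \<open>Spans of operators\<close>

definition lin_closed :: "op set \<Rightarrow> bool" where
  "lin_closed Z \<longleftrightarrow> (\<forall>F c. finite F \<and> F \<subseteq> Z \<longrightarrow> (\<lambda>S T. \<Sum>K\<in>F. c K * K S T) \<in> Z)"

lemma cspan_minimal: "lin_closed Z \<Longrightarrow> A \<subseteq> Z \<Longrightarrow> cspan A \<subseteq> Z"
  unfolding lin_closed_def cspan_def by blast

lemma join_span_subset:
  assumes "lin_closed Z" "\<And>G Ks. G \<in> \<G> \<Longrightarrow> kraus_rep V Ks G \<Longrightarrow> set Ks \<subseteq> Z"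
  shows "join_span V \<G> \<subseteq> Z"
  unfolding join_span_def kspan_def
proof (rule cspan_minimal[OF assms(1)], rule subsetI)
  fix x assume "x \<in> (\<Union>G\<in>\<G>. cspan (\<Union> {set Ks |Ks. kraus_rep V Ks G}))"
  then obtain G where G: "G \<in> \<G>" "x \<in> cspan (\<Union> {set Ks |Ks. kraus_rep V Ks G})" by blast
  have "\<Union> {set Ks |Ks. kraus_rep V Ks G} \<subseteq> Z" using assms(2)[OF G(1)] by blast
  then show "x \<in> Z" using cspan_minimal[OF assms(1)] G(2) by blast
qed

lemma cspan_base: "x \<in> A \<Longrightarrow> x \<in> cspan A"
  unfolding cspan_def by (rule CollectI, rule exI[of _ "{x}"], rule exI[of _ "\<lambda>_. 1"]) simp

lemma kraus_op_in_join_span: "G \<in> \<G> \<Longrightarrow> kraus_rep V Ks G \<Longrightarrow> K \<in> set Ks \<Longrightarrow> K \<in> join_span V \<G>"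
  unfolding join_span_def kspan_def by (rule cspan_base) (blast intro: cspan_base)

lemma supp_op_lincomb: assumes "\<And>K. K \<in> F \<Longrightarrow> supp_op V K" shows "supp_op V (\<lambda>S T. \<Sum>K\<in>F. c K * K S T)"
  unfolding supp_op_def
proof (intro allI impI)
  fix S T assume a: "\<not> (S \<subseteq> V \<and> T \<subseteq> V)"
  have "c K * K S T = 0" if "K \<in> F" for K
    using assms[OF that] a unfolding supp_op_def by simp
  then show "(\<Sum>K\<in>F. c K * K S T) = 0" by (simp add: sum.neutral)
qed

lemma lin_closed_supp_op: "lin_closed {K. supp_op V K}"
  unfolding lin_closed_def using supp_op_lincomb by blast

lemma join_span_supp_op: "join_span V \<G> \<subseteq> {K. supp_op V K}"
  by (rule join_span_subset[OF lin_closed_supp_op]) (auto simp: kraus_rep_def)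

lemma mmult_lincomb_right: "mmult X A (\<lambda>S T. \<Sum>K\<in>F. c K * B K S T) = (\<lambda>S T. \<Sum>K\<in>F. c K * mmult X A (B K) S T)"
proof (intro ext)
  fix S T show "mmult X A (\<lambda>S T. \<Sum>K\<in>F. c K * B K S T) S T = (\<Sum>K\<in>F. c K * mmult X A (B K) S T)"
  proof (cases "S \<subseteq> X \<and> T \<subseteq> X")
    case True
    then show ?thesis unfolding mmult_def
      by (simp add: sum_distrib_left ac_simps) (rule sum.swap)
  next
    case False
    then have c: "(S \<subseteq> X \<and> T \<subseteq> X) = False" by simp
    show ?thesis by (simp only: mmult_def c if_False mult_zero_right sum.neutral_const)
  qed
qed

lemma mmult_lincomb_left: "mmult X (\<lambda>S T. \<Sum>K\<in>F. c K * B K S T) A = (\<lambda>S T. \<Sum>K\<in>F. c K * mmult X (B K) A S T)"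
proof (intro ext)
  fix S T show "mmult X (\<lambda>S T. \<Sum>K\<in>F. c K * B K S T) A S T = (\<Sum>K\<in>F. c K * mmult X (B K) A S T)"
  proof (cases "S \<subseteq> X \<and> T \<subseteq> X")
    case True
    then show ?thesis unfolding mmult_def
      by (simp add: sum_distrib_left sum_distrib_right ac_simps) (rule sum.swap)
  next
    case False
    then have c: "(S \<subseteq> X \<and> T \<subseteq> X) = False" by simp
    show ?thesis by (simp only: mmult_def c if_False mult_zero_right sum.neutral_const)
  qed
qed

lemma sum_if_mem_subset:
  assumes "finite B" "A \<subseteq> B"
  shows "(\<Sum>K\<in>B. if K \<in> A then g K else 0) = (\<Sum>K\<in>A. g K)"
proof -
  have "(\<Sum>K\<in>B. if K \<in> A then g K else 0) = (\<Sum>K\<in>A. if K \<in> A then g K else 0)"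
    using assms by (intro sum.mono_neutral_right) auto
  also have "\<dots> = (\<Sum>K\<in>A. g K)" by (rule sum.cong) auto
  finally show ?thesis .
qed

lemma cspan_lincomb2:
  assumes "x \<in> cspan A" "y \<in> cspan A"
  shows "(\<lambda>S T. a * x S T + b * y S T) \<in> cspan A"
proof -
  obtain F1 c1 where 1: "finite F1" "F1 \<subseteq> A" "x = (\<lambda>S T. \<Sum>K\<in>F1. c1 K * K S T)" using assms(1) by (auto simp: cspan_def)
  obtain F2 c2 where 2: "finite F2" "F2 \<subseteq> A" "y = (\<lambda>S T. \<Sum>K\<in>F2. c2 K * K S T)" using assms(2) by (auto simp: cspan_def)
  define c where "c = (\<lambda>K. a * (if K \<in> F1 then c1 K else 0) + b * (if K \<in> F2 then c2 K else 0))"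
  have eq: "(\<lambda>S T. a * x S T + b * y S T) = (\<lambda>S T. \<Sum>K\<in>F1 \<union> F2. c K * K S T)"
  proof (intro ext)
    fix S T
    have e: "c K * K S T = a * (if K \<in> F1 then c1 K * K S T else 0) + b * (if K \<in> F2 then c2 K * K S T else 0)" for K
      by (simp add: c_def algebra_simps)
    have "(\<Sum>K\<in>F1 \<union> F2. c K * K S T) = a * (\<Sum>K\<in>F1 \<union> F2. if K \<in> F1 then c1 K * K S T else 0)
        + b * (\<Sum>K\<in>F1 \<union> F2. if K \<in> F2 then c2 K * K S T else 0)"
      by (simp only: e sum.distrib sum_distrib_left)
    also have "\<dots> = a * x S T + b * y S T"
      using 1 2 by (simp add: sum_if_mem_subset)
    finally show "a * x S T + b * y S T = (\<Sum>K\<in>F1 \<union> F2. c K * K S T)" by simp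
  qed
  have "finite (F1 \<union> F2) \<and> F1 \<union> F2 \<subseteq> A \<and> (\<lambda>S T. a * x S T + b * y S T) = (\<lambda>S T. \<Sum>K\<in>F1 \<union> F2. c K * K S T)"
    using 1 2 eq by simp
  then show ?thesis unfolding cspan_def by (intro CollectI exI)
qed

lemma cspan_zero: "(\<lambda>S T. 0) \<in> cspan A"
  unfolding cspan_def by (rule CollectI, rule exI[of _ "{}"]) simp

lemma lin_closed_cspan: "lin_closed (cspan A)"
proof -
  have "F \<subseteq> cspan A \<Longrightarrow> (\<lambda>S T. \<Sum>K\<in>F. c K * K S T) \<in> cspan A" if "finite F" for F c
    using that
  proof (induction F rule: finite_induct)
    case empty then show ?case by (simp add: cspan_zero)
  next
    case (insert K F)
    then have "(\<lambda>S T. c K * K S T + 1 * (\<Sum>K\<in>F. c K * K S T)) \<in> cspan A"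
      by (intro cspan_lincomb2) auto
    then show ?case using insert by simp
  qed
  then show ?thesis unfolding lin_closed_def by blast
qed

lemma lin_closed_join_span: "lin_closed (join_span V \<G>)"
  unfolding join_span_def by (rule lin_closed_cspan)

section \<open>Correctness of a single program on a fixed system\<close>

definition partial_correct_on :: "qvar set \<Rightarrow> qvar set \<Rightarrow> superop \<Rightarrow> op \<Rightarrow> op \<Rightarrow> bool" where
  "partial_correct_on V X E P Q \<longleftrightarrow> (\<forall>\<rho>. density X \<rho> \<longrightarrow>
     Re (trace X (mmult X P \<rho>)) \<le> Re (trace X (mmult X Q (ext_so V X E \<rho>)))
       + Re (trace X \<rho>) - Re (trace X (ext_so V X E \<rho>)))"

definition total_correct_on :: "qvar set \<Rightarrow> qvar set \<Rightarrow> superop \<Rightarrow> op \<Rightarrow> op \<Rightarrow> bool" where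
  "total_correct_on V X E P Q \<longleftrightarrow> (\<forall>\<rho>. density X \<rho> \<longrightarrow>
     Re (trace X (mmult X P \<rho>)) \<le> Re (trace X (mmult X Q (ext_so V X E \<rho>))))"

definition ops_mapping :: "qvar set \<Rightarrow> qvar set \<Rightarrow> op \<Rightarrow> op \<Rightarrow> op set" where
  "ops_mapping V X P Q = {K. supp_op V K \<and> mmult X (mmult X (idop X - Q) (ext_op V X K)) P = (\<lambda>S T. 0)}"

lemma nprog_dprog: "nprog V \<E> \<Longrightarrow> E \<in> \<E> \<Longrightarrow> dprog V E"
  by (auto simp: nprog_def)

lemma valid_par_iff_partial_correct_on:
  assumes nE: "nprog V \<E>" and pQ: "projector W Q"
  shows "valid_par V \<E> W P Q \<longleftrightarrow>
    (\<forall>E\<in>\<E>. \<forall>X. finite X \<and> V \<union> W \<subseteq> X \<longrightarrow> partial_correct_on V X E (ext_op W X P) (ext_op W X Q))"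
proof -
  have "bdd_below ((\<lambda>E. Re (trace X (mmult X (ext_op W X Q) (ext_so V X E \<rho>)))
      + Re (trace X \<rho>) - Re (trace X (ext_so V X E \<rho>))) ` \<E>)"
    if X: "finite X" "V \<union> W \<subseteq> X" "density X \<rho>" for X \<rho>
  proof (rule bdd_belowI[of _ 0], clarify)
    fix E assume "E \<in> \<E>"
    then have dE: "dprog V E" using nE by (auto simp: nprog_def)
    then obtain Ks where Ks: "kraus_rep V Ks E" by (auto simp: dprog_def)
    have pos: "positive_op X \<rho>" using X by (simp add: density_def)
    have "0 \<le> Re (trace X (mmult X (ext_op W X Q) (ext_so V X E \<rho>)))"
      using trace_projector_ext_so_Re_nonneg[OF X(1) _ Ks projector_ext_op[OF X(1) _ pQ] pos] X(2) by simp
    moreover have "Re (trace X (ext_so V X E \<rho>)) \<le> Re (trace X \<rho>)"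
      using trace_ext_so_le[OF X(1) _ dE pos] X(2) by simp
    ultimately show "0 \<le> Re (trace X (mmult X (ext_op W X Q) (ext_so V X E \<rho>)))
      + Re (trace X \<rho>) - Re (trace X (ext_so V X E \<rho>))" by simp
  qed
  moreover have "\<E> \<noteq> {}" using nE by (simp add: nprog_def)
  ultimately show ?thesis
    unfolding valid_par_def partial_correct_on_def by (auto simp: le_cINF_iff)
qed

lemma valid_tot_iff_total_correct_on:
  assumes nE: "nprog V \<E>" and pQ: "projector W Q"
  shows "valid_tot V \<E> W P Q \<longleftrightarrow>
    (\<forall>E\<in>\<E>. \<forall>X. finite X \<and> V \<union> W \<subseteq> X \<longrightarrow> total_correct_on V X E (ext_op W X P) (ext_op W X Q))"
proof -
  have "bdd_below ((\<lambda>E. Re (trace X (mmult X (ext_op W X Q) (ext_so V X E \<rho>)))) ` \<E>)"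
    if X: "finite X" "V \<union> W \<subseteq> X" "density X \<rho>" for X \<rho>
  proof (rule bdd_belowI[of _ 0], clarify)
    fix E assume "E \<in> \<E>"
    then obtain Ks where Ks: "kraus_rep V Ks E" using nE by (auto simp: nprog_def dprog_def)
    have pos: "positive_op X \<rho>" using X by (simp add: density_def)
    show "0 \<le> Re (trace X (mmult X (ext_op W X Q) (ext_so V X E \<rho>)))"
      using trace_projector_ext_so_Re_nonneg[OF X(1) _ Ks projector_ext_op[OF X(1) _ pQ] pos] X(2) by simp
  qed
  moreover have "\<E> \<noteq> {}" using nE by (simp add: nprog_def)
  ultimately show ?thesis
    unfolding valid_tot_def total_correct_on_def by (auto simp: le_cINF_iff)
qed

lemma total_correct_on_imp_partial_correct_on:
  assumes "finite X" "V \<subseteq> X" "dprog V E" "total_correct_on V X E P Q"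
  shows "partial_correct_on V X E P Q"
  using assms trace_ext_so_le[OF assms(1-3)]
  by (fastforce simp: total_correct_on_def partial_correct_on_def density_def)

lemma lin_closed_ops_mapping: "lin_closed (ops_mapping V X P Q)"
  unfolding lin_closed_def
proof (intro allI impI)
  fix F c assume h: "finite F \<and> F \<subseteq> ops_mapping V X P Q"
  have "mmult X (mmult X (idop X - Q) (ext_op V X (\<lambda>S T. \<Sum>K\<in>F. c K * K S T))) P
      = (\<lambda>S T. \<Sum>K\<in>F. c K * mmult X (mmult X (idop X - Q) (ext_op V X K)) P S T)"
    by (simp only: ext_op_lincomb mmult_lincomb_right mmult_lincomb_left)
  also have "\<dots> = (\<lambda>S T. 0)" using h by (auto simp: ops_mapping_def fun_eq_iff intro!: sum.neutral)
  finally show "(\<lambda>S T. \<Sum>K\<in>F. c K * K S T) \<in> ops_mapping V X P Q"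
    using h supp_op_lincomb[of F V c] by (auto simp: ops_mapping_def)
qed

lemma mmult_ext_op_ext_op:
  assumes "finite X" "V \<subseteq> W" "W \<subseteq> X"
  shows "mmult X (ext_op V X K) (ext_op W X P) = ext_op W X (mmult W (ext_op V W K) P)"
proof -
  have "ext_op V X K = ext_op W X (ext_op V W K)" using ext_op_ext_op[OF assms(2,3)] by simp
  then show ?thesis by (simp add: mmult_ext_op[OF assms(1,3)])
qed

lemma ops_mapping_ext_op:
  assumes "finite X" "V \<subseteq> W" "W \<subseteq> X"
  shows "ops_mapping V W P Q \<subseteq> ops_mapping V X (ext_op W X P) (ext_op W X Q)"
proof
  fix K assume K: "K \<in> ops_mapping V W P Q"
  have "mmult X (mmult X (idop X - ext_op W X Q) (ext_op V X K)) (ext_op W X P)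
      = ext_op W X (mmult W (mmult W (idop W - Q) (ext_op V W K)) P)"
  proof -
    have "idop X - ext_op W X Q = ext_op W X (idop W - Q)" by (simp add: ext_op_diff ext_op_idop)
    then show ?thesis by (simp add: mmult_assoc mmult_ext_op_ext_op[OF assms] mmult_ext_op[OF assms(1,3)])
  qed
  then show "K \<in> ops_mapping V X (ext_op W X P) (ext_op W X Q)" using K by (simp add: ops_mapping_def)
qed

lemma ops_mapping_mmult_right_iff:
  assumes "finite X" "V \<subseteq> X" "supp_op V K" "mmult X (ext_op V X T) P = P"
  shows "mmult V K T \<in> ops_mapping V X P Q \<longleftrightarrow> K \<in> ops_mapping V X P Q"
  using assms by (simp add: ops_mapping_def mmult_ext_op[symmetric] mmult_assoc)

lemma mmult_compl_projector_eq_0: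
  assumes fin: "finite X" and pP: "projector X P"
    and h: "\<And>\<psi>. supp_vec X \<psi> \<Longrightarrow> apply_op X P \<psi> = \<psi> \<Longrightarrow> apply_op X Q (apply_op X A \<psi>) = apply_op X A \<psi>"
  shows "mmult X (mmult X (idop X - Q) A) P = (\<lambda>S T. 0)"
proof (rule op_eqI_ket[OF fin])
  fix S assume "S \<subseteq> X"
  define \<psi> where "\<psi> = apply_op X P (ket S)"
  have "apply_op X P \<psi> = \<psi>" by (simp add: \<psi>_def apply_op_projector_idem[OF pP])
  then have e: "apply_op X Q (apply_op X A \<psi>) = apply_op X A \<psi>" using h by (simp add: \<psi>_def)
  have "apply_op X (mmult X (mmult X (idop X - Q) A) P) (ket S) = apply_op X (idop X - Q) (apply_op X A \<psi>)"
    by (simp add: apply_op_mmult \<psi>_def)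
  also have "\<dots> = (\<lambda>R. 0)" using fin by (simp add: apply_op_diff apply_op_idop e)
  finally show "apply_op X (mmult X (mmult X (idop X - Q) A) P) (ket S) = apply_op X (\<lambda>S T. 0) (ket S)" by simp
qed (simp, simp add: supp_op_def)

lemma trace_compl_sandwich_le:
  assumes fin: "finite X" and pP: "projector X P" and pQ: "projector X Q" and pos: "positive_op X \<rho>"
    and A: "mmult X (mmult X (idop X - Q) A) P = (\<lambda>S T. 0)"
  defines "\<sigma> \<equiv> mmult X (mmult X (idop X - P) \<rho>) (adj (idop X - P))"
  shows "Re (trace X (mmult X (idop X - Q) (mmult X (mmult X A \<rho>) (adj A))))
      \<le> Re (trace X (mmult X (mmult X A \<sigma>) (adj A)))"
proof -
  define Qc where "Qc = idop X - Q"
  define Pc where "Pc = idop X - P"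
  have pQc: "projector X Qc" using projector_compl[OF fin pQ] by (simp add: Qc_def)
  have "mmult X (mmult X Qc A) Pc = mmult X Qc A"
    using A fin by (simp add: Pc_def Qc_def mmult_diff_right mmult_idop_right)
  then have "trace X (mmult X Qc (mmult X (mmult X A \<rho>) (adj A)))
      = trace X (mmult X (mmult X (mmult X (mmult X Qc A) Pc) \<rho>) (adj (mmult X (mmult X Qc A) Pc)))"
    by (simp only: trace_projector_times_sandwich[OF pQc])
  also have "\<dots> = trace X (mmult X (mmult X (mmult X Qc A) \<sigma>) (adj (mmult X Qc A)))"
    by (simp only: sandwich_mmult \<sigma>_def Pc_def)
  also have "\<dots> = trace X (mmult X Qc (mmult X (mmult X A \<sigma>) (adj A)))"
    by (rule trace_projector_times_sandwich[OF pQc, symmetric])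
  also have "\<dots> = trace X (mmult X (mmult X A \<sigma>) (adj A)) - trace X (mmult X Q (mmult X (mmult X A \<sigma>) (adj A)))"
    unfolding Qc_def by (rule trace_mmult_compl[OF fin]) simp
  finally have eq: "trace X (mmult X Qc (mmult X (mmult X A \<rho>) (adj A))) =
      trace X (mmult X (mmult X A \<sigma>) (adj A)) - trace X (mmult X Q (mmult X (mmult X A \<sigma>) (adj A)))" .
  have "positive_op X \<sigma>" using positive_op_sandwich[OF pos] by (simp add: \<sigma>_def)
  then have "Re (trace X (mmult X Q (mmult X (mmult X A \<sigma>) (adj A)))) \<ge> 0"
    unfolding trace_projector_times_sandwich[OF pQ] by (rule trace_sandwich_Re_nonneg)
  then show ?thesis using eq by (simp add: Qc_def)
qed

text \<open>The weight that a program moves outside Q comes only from the part of the input outside P.\<close>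
lemma trace_compl_ext_so_le:
  assumes fin: "finite X" and VX: "V \<subseteq> X" and Ls: "kraus_rep V Ls F"
    and pP: "projector X P" and pQ: "projector X Q" and pos: "positive_op X \<rho>"
    and C: "set Ls \<subseteq> ops_mapping V X P Q"
  shows "Re (trace X (mmult X (idop X - Q) (ext_so V X F \<rho>)))
      \<le> Re (trace X (ext_so V X F (mmult X (mmult X (idop X - P) \<rho>) (adj (idop X - P)))))"
proof -
  define \<sigma> where "\<sigma> = mmult X (mmult X (idop X - P) \<rho>) (adj (idop X - P))"
  have "Re (trace X (mmult X (idop X - Q) (ext_so V X F \<rho>))) =
      (\<Sum>L\<leftarrow>Ls. Re (trace X (mmult X (idop X - Q) (mmult X (mmult X (ext_op V X L) \<rho>) (adj (ext_op V X L))))))"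
    by (simp only: ext_so_kraus[OF fin VX Ls] mmult_sum_list_right trace_sum_list Re_sum_list)
  also have "\<dots> \<le> (\<Sum>L\<leftarrow>Ls. Re (trace X (mmult X (mmult X (ext_op V X L) \<sigma>) (adj (ext_op V X L)))))"
    using C unfolding \<sigma>_def
    by (intro sum_list_mono trace_compl_sandwich_le[OF fin pP pQ pos]) (auto simp: ops_mapping_def)
  also have "\<dots> = Re (trace X (ext_so V X F \<sigma>))"
    by (simp only: ext_so_kraus[OF fin VX Ls] trace_sum_list Re_sum_list)
  finally show ?thesis by (simp add: \<sigma>_def)
qed

lemma partial_correct_on_if_kraus:
  assumes fin: "finite X" and VX: "V \<subseteq> X" and dF: "dprog V F" and Ls: "kraus_rep V Ls F"
    and pP: "projector X P" and pQ: "projector X Q" and C: "set Ls \<subseteq> ops_mapping V X P Q"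
  shows "partial_correct_on V X F P Q"
  unfolding partial_correct_on_def
proof (intro allI impI)
  fix \<rho> assume "density X \<rho>"
  then have pos: "positive_op X \<rho>" by (simp add: density_def)
  then have sr: "supp_op X \<rho>" by (simp add: positive_op_def)
  define \<sigma> where "\<sigma> = mmult X (mmult X (idop X - P) \<rho>) (adj (idop X - P))"
  have "Re (trace X (ext_so V X F \<sigma>)) \<le> Re (trace X \<sigma>)"
    using trace_ext_so_le[OF fin VX dF positive_op_sandwich[OF pos]] by (simp add: \<sigma>_def)
  also have "trace X \<sigma> = trace X \<rho> - trace X (mmult X P \<rho>)"
    unfolding \<sigma>_def trace_sandwich_projector[OF projector_compl[OF fin pP]]
    by (rule trace_mmult_compl[OF fin sr])
  finally have "Re (trace X (mmult X (idop X - Q) (ext_so V X F \<rho>))) \<le> Re (trace X \<rho>) - Re (trace X (mmult X P \<rho>))"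
    using trace_compl_ext_so_le[OF fin VX Ls pP pQ pos C] by (simp add: \<sigma>_def)
  moreover have "trace X (mmult X (idop X - Q) (ext_so V X F \<rho>))
      = trace X (ext_so V X F \<rho>) - trace X (mmult X Q (ext_so V X F \<rho>))"
    by (rule trace_mmult_compl[OF fin]) simp
  ultimately show "Re (trace X (mmult X P \<rho>)) \<le> Re (trace X (mmult X Q (ext_so V X F \<rho>)))
      + Re (trace X \<rho>) - Re (trace X (ext_so V X F \<rho>))" by simp
qed

text \<open>On a pure input in the range of P the defect of partial correctness is the sum over the Kraus
  operators of the squared norms of the components of (K (x) I) psi orthogonal to Q.\<close>
lemma apply_ext_kraus_fixed_if_pure_correct:
  assumes fin: "finite X" and VX: "V \<subseteq> X" and Ks: "kraus_rep V Ks E"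
    and pQ: "projector X Q" and P\<psi>: "apply_op X P \<psi> = \<psi>"
    and H: "Re (trace X (mmult X P (outer X \<psi> \<psi>))) \<le> Re (trace X (mmult X Q (ext_so V X E (outer X \<psi> \<psi>))))
       + Re (trace X (outer X \<psi> \<psi>)) - Re (trace X (ext_so V X E (outer X \<psi> \<psi>)))"
    and K: "K \<in> set Ks"
  shows "apply_op X Q (apply_op X (ext_op V X K) \<psi>) = apply_op X (ext_op V X K) \<psi>"
proof -
  define v where "v = (\<lambda>K. apply_op X (ext_op V X K) \<psi>)"
  define f where "f = (\<lambda>K. Re (inner X (\<lambda>S. v K S - apply_op X Q (v K) S) (\<lambda>S. v K S - apply_op X Q (v K) S)))"
  have "Re (trace X (mmult X P (outer X \<psi> \<psi>))) = Re (trace X (outer X \<psi> \<psi>))"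
    by (simp add: trace_mmult_outer trace_outer P\<psi>)
  then have "(\<Sum>K\<leftarrow>Ks. Re (inner X (v K) (v K))) - (\<Sum>K\<leftarrow>Ks. Re (inner X (apply_op X Q (v K)) (apply_op X Q (v K)))) \<le> 0"
    using H unfolding trace_projector_ext_so_outer[OF fin VX Ks pQ] trace_ext_so_outer[OF fin VX Ks] Re_sum_list v_def
    by simp
  moreover have "Re (inner X (v K) (v K)) - Re (inner X (apply_op X Q (v K)) (apply_op X Q (v K))) = f K" for K
    using inner_self_projector_split[OF fin pQ, of "v K"] unfolding f_def by (simp add: v_def)
  ultimately have "(\<Sum>K\<leftarrow>Ks. f K) \<le> 0"
    by (simp only: sum_list_subtractf[symmetric])
  then have "f K = 0"
    using sum_list_nonneg_le_0_imp_eq_0[of Ks f, OF _ _ K] by (simp add: f_def inner_self_Re_nonneg)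
  then have "(\<lambda>S. v K S - apply_op X Q (v K) S) = (\<lambda>S. 0)"
    unfolding f_def by (intro inner_self_Re_eq_0D[OF fin]) (auto simp: supp_vec_def v_def apply_op_def)
  then show ?thesis by (simp add: v_def fun_eq_iff)
qed

lemma apply_ext_kraus_fixed_if_partial_correct_on:
  assumes fin: "finite X" and VX: "V \<subseteq> X" and Ks: "kraus_rep V Ks E"
    and pQ: "projector X Q" and H: "partial_correct_on V X E P Q"
    and s\<psi>: "supp_vec X \<psi>" and P\<psi>: "apply_op X P \<psi> = \<psi>" and K: "K \<in> set Ks"
  shows "apply_op X Q (apply_op X (ext_op V X K) \<psi>) = apply_op X (ext_op V X K) \<psi>"
proof -
  obtain r :: real where r: "r > 0" "Re (inner X (\<lambda>S. complex_of_real r * \<psi> S) (\<lambda>S. complex_of_real r * \<psi> S)) \<le> 1"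
    using exists_scale_inner_self_le_1 by blast
  define \<phi> where "\<phi> = (\<lambda>S. complex_of_real r * \<psi> S)"
  have P\<phi>: "apply_op X P \<phi> = \<phi>" using P\<psi> unfolding \<phi>_def apply_op_scale_vec by simp
  have "density X (outer X \<phi> \<phi>)" using r(2) by (simp add: \<phi>_def density_outer)
  then have "apply_op X Q (apply_op X (ext_op V X K) \<phi>) = apply_op X (ext_op V X K) \<phi>"
    using H unfolding partial_correct_on_def
    by (intro apply_ext_kraus_fixed_if_pure_correct[OF fin VX Ks pQ P\<phi> _ K]) blast
  then show ?thesis using r(1) by (simp add: \<phi>_def apply_op_scale_vec fun_eq_iff)
qed

lemma partial_correct_on_iff_kraus:
  assumes fin: "finite X" and VX: "V \<subseteq> X" and dE: "dprog V E" and Ks: "kraus_rep V Ks E"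
    and pP: "projector X P" and pQ: "projector X Q"
  shows "partial_correct_on V X E P Q \<longleftrightarrow> set Ks \<subseteq> ops_mapping V X P Q"
proof
  assume H: "partial_correct_on V X E P Q"
  show "set Ks \<subseteq> ops_mapping V X P Q"
  proof
    fix K assume K: "K \<in> set Ks"
    have "mmult X (mmult X (idop X - Q) (ext_op V X K)) P = (\<lambda>S T. 0)"
      using apply_ext_kraus_fixed_if_partial_correct_on[OF fin VX Ks pQ H _ _ K]
      by (rule mmult_compl_projector_eq_0[OF fin pP])
    then show "K \<in> ops_mapping V X P Q" using kraus_rep_supp_op[OF Ks K] by (simp add: ops_mapping_def)
  qed
qed (rule partial_correct_on_if_kraus[OF assms])

lemma trace_mmult_compl_sandwich:
  assumes fin: "finite X" and pP: "projector X P"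
    and sM: "supp_op X M" and aM: "adj M = M" and MP: "mmult X M P = P"
  shows "trace X (mmult X M (mmult X (mmult X (idop X - P) \<rho>) (adj (idop X - P))))
      = trace X (mmult X M \<rho>) - trace X (mmult X P \<rho>)"
proof -
  define Pc where "Pc = idop X - P"
  have sP: "supp_op X P" and aP: "adj P = P" using pP by (simp_all add: projector_def)
  have aPc: "adj Pc = Pc" by (simp add: Pc_def adj_diff aP)
  have "mmult X P M = adj (mmult X (adj M) (adj P))" by (simp add: adj_mmult)
  then have PM: "mmult X P M = P" by (simp add: aM aP MP)
  have "mmult X Pc M = M - P" unfolding Pc_def by (simp add: mmult_diff_left mmult_idop_left[OF fin sM] PM)
  then have "mmult X (mmult X Pc M) Pc = (M - P) - (mmult X M P - mmult X P P)"
    using fin sM sP by (simp add: Pc_def mmult_diff_right mmult_diff_left mmult_idop_right)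
  then have PMP: "mmult X (mmult X Pc M) Pc = M - P" by (simp add: MP projector_idem[OF pP] fun_eq_iff)
  have "trace X (mmult X M (mmult X (mmult X Pc \<rho>) (adj Pc)))
      = trace X (mmult X (mmult X M (mmult X Pc \<rho>)) Pc)"
    by (simp only: aPc mmult_assoc)
  also have "\<dots> = trace X (mmult X Pc (mmult X M (mmult X Pc \<rho>)))"
    by (rule trace_mmult_commute)
  also have "\<dots> = trace X (mmult X (mmult X (mmult X Pc M) Pc) \<rho>)"
    by (simp only: mmult_assoc)
  also have "\<dots> = trace X (mmult X M \<rho>) - trace X (mmult X P \<rho>)"
    by (simp only: PMP mmult_diff_left trace_diff)
  finally show ?thesis by (simp only: Pc_def)
qed

text \<open>Total correctness is partial correctness plus termination: the Kraus effect, the sum of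
  all K^dagger K, must fix the range of P.\<close>
lemma total_correct_on_if_kraus:
  assumes fin: "finite X" and VX: "V \<subseteq> X" and Ls: "kraus_rep V Ls F"
    and pP: "projector X P" and pQ: "projector X Q" and C: "set Ls \<subseteq> ops_mapping V X P Q"
    and MP: "mmult X (ext_op V X (kraus_effect V Ls)) P = P"
  shows "total_correct_on V X F P Q"
  unfolding total_correct_on_def
proof (intro allI impI)
  fix \<rho> assume "density X \<rho>"
  then have pos: "positive_op X \<rho>" by (simp add: density_def)
  define \<sigma> where "\<sigma> = mmult X (mmult X (idop X - P) \<rho>) (adj (idop X - P))"
  have "trace X (ext_so V X F \<sigma>) = trace X (mmult X (ext_op V X (kraus_effect V Ls)) \<sigma>)"
    by (rule trace_ext_so_kraus_effect[OF fin VX Ls])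
  also have "\<dots> = trace X (ext_so V X F \<rho>) - trace X (mmult X P \<rho>)"
    unfolding \<sigma>_def trace_ext_so_kraus_effect[OF fin VX Ls]
    by (rule trace_mmult_compl_sandwich[OF fin pP _ _ MP]) (simp_all add: adj_ext_op adj_kraus_effect)
  finally have "trace X (ext_so V X F \<sigma>) = trace X (ext_so V X F \<rho>) - trace X (mmult X P \<rho>)" .
  moreover have "trace X (mmult X (idop X - Q) (ext_so V X F \<rho>))
      = trace X (ext_so V X F \<rho>) - trace X (mmult X Q (ext_so V X F \<rho>))"
    by (rule trace_mmult_compl[OF fin]) simp
  ultimately show "Re (trace X (mmult X P \<rho>)) \<le> Re (trace X (mmult X Q (ext_so V X F \<rho>)))"
    using trace_compl_ext_so_le[OF fin VX Ls pP pQ pos C] by (simp add: \<sigma>_def)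
qed

lemma trace_projector_ext_so_Re_le:
  assumes fin: "finite X" and VX: "V \<subseteq> X" and Ks: "kraus_rep V Ks E"
    and pQ: "projector X Q" and pos: "positive_op X \<rho>"
  shows "Re (trace X (mmult X Q (ext_so V X E \<rho>))) \<le> Re (trace X (ext_so V X E \<rho>))"
proof -
  have "0 \<le> Re (trace X (mmult X (idop X - Q) (ext_so V X E \<rho>)))"
    by (rule trace_projector_ext_so_Re_nonneg[OF fin VX Ks projector_compl[OF fin pQ] pos])
  then show ?thesis by (simp add: trace_mmult_compl[OF fin])
qed

text \<open>Each diagonal block loses a nonnegative amount of trace, so none can lose any.\<close>
lemma trace_block_preserved_if_trace_preserved:
  assumes fin: "finite X" and VX: "V \<subseteq> X" and dE: "dprog V E" and pos: "positive_op X \<rho>"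
    and ge: "Re (trace X \<rho>) \<le> Re (trace X (ext_so V X E \<rho>))" and a: "a \<subseteq> X - V"
  shows "Re (trace V (E (block_op V a a \<rho>))) = Re (trace V (block_op V a a \<rho>))"
proof -
  define d where "d = (\<lambda>b. Re (trace V (block_op V b b \<rho>)) - Re (trace V (E (block_op V b b \<rho>))))"
  have d0: "\<forall>b\<in>Pow (X - V). 0 \<le> d b"
    using dE positive_op_block_op[OF fin VX _ pos] by (auto simp: d_def dprog_def)
  have "(\<Sum>b\<in>Pow (X - V). d b) = Re (trace X \<rho>) - Re (trace X (ext_so V X E \<rho>))"
    by (simp add: d_def sum_subtractf trace_blocks[OF fin VX, of \<rho>] trace_ext_so_blocks[OF fin VX])
  then have "(\<Sum>b\<in>Pow (X - V). d b) = 0"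
    using ge d0 sum_nonneg[of "Pow (X - V)" d] by fastforce
  then have "d a = 0" using sum_nonneg_eq_0_iff[of "Pow (X - V)" d] d0 fin a by simp
  then show ?thesis by (simp add: d_def)
qed

lemma block_vec_in_term_space_if_total_correct_on:
  assumes fin: "finite X" and VX: "V \<subseteq> X" and dE: "dprog V E"
    and pP: "projector X P" and pQ: "projector X Q" and H: "total_correct_on V X E P Q"
    and s\<psi>: "supp_vec X \<psi>" and P\<psi>: "apply_op X P \<psi> = \<psi>" and a: "a \<subseteq> X - V"
  shows "block_vec V a \<psi> \<in> term_space V E"
proof -
  have fV: "finite V" using fin VX finite_subset by blast
  obtain Ks where Ks: "kraus_rep V Ks E" using dE by (auto simp: dprog_def)
  obtain r :: real where r: "r > 0" "Re (inner X (\<lambda>S. complex_of_real r * \<psi> S) (\<lambda>S. complex_of_real r * \<psi> S)) \<le> 1"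
    using exists_scale_inner_self_le_1 by blast
  define \<phi> where "\<phi> = (\<lambda>S. complex_of_real r * \<psi> S)"
  define \<rho> where "\<rho> = outer X \<phi> \<phi>"
  define \<phi>a where "\<phi>a = block_vec V a \<phi>"
  have "Re (trace X \<rho>) = Re (trace X (mmult X P \<rho>))"
    using P\<psi> by (simp add: \<rho>_def \<phi>_def trace_mmult_outer trace_outer apply_op_scale_vec)
  also have "\<dots> \<le> Re (trace X (mmult X Q (ext_so V X E \<rho>)))"
    using H r(2) by (simp add: total_correct_on_def \<rho>_def \<phi>_def density_outer)
  also have "\<dots> \<le> Re (trace X (ext_so V X E \<rho>))"
    unfolding \<rho>_def by (rule trace_projector_ext_so_Re_le[OF fin VX Ks pQ positive_op_outer])
  finally have "Re (trace V (E (outer V \<phi>a \<phi>a))) = Re (trace V (outer V \<phi>a \<phi>a))"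
    using trace_block_preserved_if_trace_preserved[OF fin VX dE positive_op_outer _ a] VX a
    by (simp add: \<rho>_def \<phi>a_def block_op_outer)
  moreover have "Im (trace V (E (outer V \<phi>a \<phi>a))) = Im (trace V (outer V \<phi>a \<phi>a))"
    by (simp only: trace_kraus_outer[OF fV Ks] Im_sum_list_inner_self Im_trace_outer_self)
  ultimately have "\<phi>a \<in> term_space V E"
    by (simp add: term_space_def complex_eqI \<phi>a_def supp_vec_block_vec)
  then have "apply_op V (idop V - kraus_effect V Ks) (\<lambda>s. complex_of_real r * block_vec V a \<psi> s) = (\<lambda>S. 0)"
    unfolding term_space_kraus_iff[OF fV dE Ks] \<phi>a_def \<phi>_def block_vec_scale by simp
  then have "apply_op V (idop V - kraus_effect V Ks) (block_vec V a \<psi>) = (\<lambda>S. 0)"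
    unfolding apply_op_scale_vec using r(1) by (simp add: fun_eq_iff)
  then show ?thesis unfolding term_space_kraus_iff[OF fV dE Ks] by (simp add: supp_vec_block_vec)
qed

section \<open>Restriction to a subspace\<close>

lemma kraus_rep_comp_proj_so:
  assumes pT: "projector V T" and Ks: "kraus_rep V Ks E"
  shows "kraus_rep V (map (\<lambda>K. mmult V K T) Ks) (E \<circ> proj_so V T)"
proof -
  have E: "E = (\<lambda>\<rho> S T. \<Sum>K\<leftarrow>Ks. mmult V (mmult V K \<rho>) (adj K) S T)" using Ks by (simp add: kraus_rep_def)
  have aT: "adj T = T" using pT by (simp add: projector_def)
  show ?thesis unfolding kraus_rep_def
    by (auto simp: E proj_so_def fun_eq_iff adj_mmult aT mmult_assoc comp_def)
qed

lemma dprog_comp_proj_so: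
  assumes fV: "finite V" and dE: "dprog V E" and pT: "projector V T"
  shows "dprog V (E \<circ> proj_so V T)"
  unfolding dprog_def
proof (intro conjI allI impI)
  obtain Ks where "kraus_rep V Ks E" using dE by (auto simp: dprog_def)
  then show "\<exists>Ks. kraus_rep V Ks (E \<circ> proj_so V T)" using kraus_rep_comp_proj_so[OF pT] by blast
  fix \<rho> assume pos: "positive_op V \<rho>"
  have aT: "adj T = T" using pT by (simp add: projector_def)
  have "positive_op V (proj_so V T \<rho>)"
    using positive_op_sandwich[OF pos, of T] by (simp add: proj_so_def aT)
  then have "Re (trace V (E (proj_so V T \<rho>))) \<le> Re (trace V (proj_so V T \<rho>))"
    using dE by (simp add: dprog_def)
  also have "trace V (proj_so V T \<rho>) = trace V \<rho> - trace V (mmult V (idop V - T) \<rho>)"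
    using trace_sandwich_projector[OF pT, of \<rho>] trace_mmult_compl[OF fV, of \<rho> T] pos
    by (simp add: proj_so_def aT positive_op_def)
  also have "trace V (mmult V (idop V - T) \<rho>) = trace V (mmult V (mmult V (idop V - T) \<rho>) (adj (idop V - T)))"
    by (rule trace_sandwich_projector[OF projector_compl[OF fV pT], symmetric])
  finally show "Re (trace V ((E \<circ> proj_so V T) \<rho>)) \<le> Re (trace V \<rho>)"
    using trace_sandwich_Re_nonneg[OF pos, of "idop V - T"] by simp
qed

lemma partial_correct_on_comp_proj_so:
  assumes fin: "finite X" and VX: "V \<subseteq> X" and dE: "dprog V E" and pT: "projector V T"
    and pP: "projector X P" and pQ: "projector X Q" and TP: "mmult X (ext_op V X T) P = P"
    and H: "partial_correct_on V X E P Q"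
  shows "partial_correct_on V X (E \<circ> proj_so V T) P Q"
proof -
  have fV: "finite V" using fin VX finite_subset by blast
  obtain Ks where Ks: "kraus_rep V Ks E" using dE by (auto simp: dprog_def)
  have "set Ks \<subseteq> ops_mapping V X P Q" using H partial_correct_on_iff_kraus[OF fin VX dE Ks pP pQ] by blast
  then have "set (map (\<lambda>K. mmult V K T) Ks) \<subseteq> ops_mapping V X P Q"
    using ops_mapping_mmult_right_iff[OF fin VX _ TP] kraus_rep_supp_op[OF Ks] by auto
  then show ?thesis
    by (rule partial_correct_on_if_kraus[OF fin VX dprog_comp_proj_so[OF fV dE pT] kraus_rep_comp_proj_so[OF pT Ks] pP pQ])
qed

lemma kraus_rep_zero: "kraus_rep V Ks E \<Longrightarrow> E (\<lambda>S T. 0) = (\<lambda>S T. 0)"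
  by (induction Ks arbitrary: E) (auto simp: kraus_rep_def fun_eq_iff)

lemma apply_kraus_comp_proj_so_eq_0:
  assumes fV: "finite V" and pT: "projector V T" and Ks: "kraus_rep V Ks E"
    and Gs: "kraus_rep V Gs (E \<circ> proj_so V T)" and G: "G \<in> set Gs"
    and sx: "supp_vec V x" and Tx: "apply_op V T x = (\<lambda>S. 0)"
  shows "apply_op V G x = (\<lambda>S. 0)"
proof -
  have aT: "adj T = T" using pT by (simp add: projector_def)
  have "proj_so V T (outer V x x) = (\<lambda>S T. 0)"
    unfolding proj_so_def using mmult_outer_right[of V "apply_op V T x" x T] aT
    by (simp add: mmult_outer_left Tx)
  then have "(E \<circ> proj_so V T) (outer V x x) = (\<lambda>S T. 0)" using kraus_rep_zero[OF Ks] by simp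
  then have "(\<Sum>K\<leftarrow>Gs. Re (inner V (apply_op V K x) (apply_op V K x))) \<le> 0"
    using trace_kraus_outer[OF fV Gs, of x] by (simp add: trace_def Re_sum_list[symmetric])
  then have "Re (inner V (apply_op V G x) (apply_op V G x)) = 0"
    using sum_list_nonneg_le_0_imp_eq_0[of Gs "\<lambda>K. Re (inner V (apply_op V K x) (apply_op V K x))", OF _ _ G]
    by (simp add: inner_self_Re_nonneg)
  then show ?thesis using inner_self_Re_eq_0D[OF fV supp_vec_apply_op] by blast
qed

lemma kraus_rep_comp_proj_so_absorb:
  assumes fV: "finite V" and pT: "projector V T" and Ks: "kraus_rep V Ks E"
    and Gs: "kraus_rep V Gs (E \<circ> proj_so V T)" and G: "G \<in> set Gs"
  shows "mmult V G T = G"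
proof (rule op_eqI_ket[OF fV])
  show "supp_op V (mmult V G T)" by simp
  show "supp_op V G" using kraus_rep_supp_op[OF Gs G] .
  fix S assume S: "S \<subseteq> V"
  define x where "x = (\<lambda>U. ket S U - apply_op V T (ket S) U)"
  have "supp_vec V x" using supp_vec_ket[OF S] by (auto simp: x_def supp_vec_def apply_op_def)
  moreover have "apply_op V T x = (\<lambda>S. 0)"
    unfolding x_def apply_op_vec_diff apply_op_projector_idem[OF pT] by simp
  ultimately have "apply_op V G x = (\<lambda>S. 0)" by (rule apply_kraus_comp_proj_so_eq_0[OF fV pT Ks Gs G])
  then show "apply_op V (mmult V G T) (ket S) = apply_op V G (ket S)"
    by (simp add: x_def apply_op_vec_diff apply_op_mmult fun_eq_iff)
qed

lemma comp_proj_so_idop: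
  assumes fV: "finite V" and dE: "dprog V E"
  shows "E \<circ> proj_so V (idop V) = E"
proof -
  obtain Ks where Ks: "kraus_rep V Ks E" using dE by (auto simp: dprog_def)
  have r: "kraus_rep V (map (\<lambda>K. mmult V K (idop V)) Ks) (E \<circ> proj_so V (idop V))"
    by (rule kraus_rep_comp_proj_so[OF projector_idop[OF fV] Ks])
  have "\<forall>K\<in>set Ks. supp_op V K" using Ks by (simp add: kraus_rep_def)
  then have m: "map (\<lambda>K. mmult V K (idop V)) Ks = Ks"
    using fV by (induction Ks) (auto simp: mmult_idop_right)
  show ?thesis using r Ks unfolding m kraus_rep_def by simp
qed

lemma kraus_effect_fixes_projector:
  assumes fV: "finite V" and dF: "dprog V F" and Ls: "kraus_rep V Ls F" and pT: "projector V T"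
    and sub: "op_range V T \<subseteq> term_space V F"
  shows "mmult V (kraus_effect V Ls) T = T"
proof (rule op_eqI_ket[OF fV])
  show "supp_op V (mmult V (kraus_effect V Ls) T)" by simp
  show "supp_op V T" using pT by (simp add: projector_def)
  fix S assume S: "S \<subseteq> V"
  define y where "y = apply_op V T (ket S)"
  have "y \<in> op_range V T" using S by (auto simp: y_def op_range_def supp_vec_ket)
  then have "y \<in> term_space V F" using sub by blast
  then have "apply_op V (idop V - kraus_effect V Ls) y = (\<lambda>S. 0)" using term_space_kraus_iff[OF fV dF Ls] by blast
  then have "apply_op V (kraus_effect V Ls) y = y"
    using fV by (simp add: apply_op_diff apply_op_idop y_def fun_eq_iff)
  then show "apply_op V (mmult V (kraus_effect V Ls) T) (ket S) = apply_op V T (ket S)"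
    by (simp add: apply_op_mmult y_def)
qed

lemma mmult_ext_op_fixes_if_blocks:
  assumes fin: "finite X" and VX: "V \<subseteq> X" and pP: "projector X P"
    and h: "\<And>\<psi> a. supp_vec X \<psi> \<Longrightarrow> apply_op X P \<psi> = \<psi> \<Longrightarrow> a \<subseteq> X - V \<Longrightarrow>
      apply_op V T (block_vec V a \<psi>) = block_vec V a \<psi>"
  shows "mmult X (ext_op V X T) P = P"
proof (rule op_eqI_ket[OF fin])
  show "supp_op X (mmult X (ext_op V X T) P)" by simp
  show "supp_op X P" using pP by (simp add: projector_def)
  fix S assume "S \<subseteq> X"
  define \<psi> where "\<psi> = apply_op X P (ket S)"
  have s\<psi>: "supp_vec X \<psi>" by (simp add: \<psi>_def)
  have P\<psi>: "apply_op X P \<psi> = \<psi>" by (simp add: \<psi>_def apply_op_projector_idem[OF pP])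
  have "apply_op X (ext_op V X T) \<psi> = \<psi>"
  proof (rule vec_eqI_blocks[OF VX supp_vec_apply_op s\<psi>])
    fix a assume a: "a \<subseteq> X - V"
    show "block_vec V a (apply_op X (ext_op V X T) \<psi>) = block_vec V a \<psi>"
      using h[OF s\<psi> P\<psi> a] by (simp only: block_vec_apply_ext_op[OF fin VX a])
  qed
  then show "apply_op X (mmult X (ext_op V X T) P) (ket S) = apply_op X P (ket S)"
    by (simp add: apply_op_mmult \<psi>_def)
qed

lemma total_correct_on_iff_kraus:
  assumes fin: "finite X" and VX: "V \<subseteq> X" and dE: "dprog V E" and Ks: "kraus_rep V Ks E"
    and pP: "projector X P" and pQ: "projector X Q"
  shows "total_correct_on V X E P Q \<longleftrightarrow>
    set Ks \<subseteq> ops_mapping V X P Q \<and> mmult X (ext_op V X (kraus_effect V Ks)) P = P"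
proof
  assume H: "total_correct_on V X E P Q"
  have fV: "finite V" using fin VX finite_subset by blast
  have "partial_correct_on V X E P Q" by (rule total_correct_on_imp_partial_correct_on[OF fin VX dE H])
  moreover have "mmult X (ext_op V X (kraus_effect V Ks)) P = P"
  proof (rule mmult_ext_op_fixes_if_blocks[OF fin VX pP])
    fix \<psi> a assume "supp_vec X \<psi>" "apply_op X P \<psi> = \<psi>" "a \<subseteq> X - V"
    then have "block_vec V a \<psi> \<in> term_space V E"
      by (rule block_vec_in_term_space_if_total_correct_on[OF fin VX dE pP pQ H])
    then have "apply_op V (idop V - kraus_effect V Ks) (block_vec V a \<psi>) = (\<lambda>S. 0)"
      using term_space_kraus_iff[OF fV dE Ks] by blast
    then show "apply_op V (kraus_effect V Ks) (block_vec V a \<psi>) = block_vec V a \<psi>"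
      using fV by (simp add: apply_op_compl supp_vec_block_vec fun_eq_iff)
  qed
  ultimately show "set Ks \<subseteq> ops_mapping V X P Q \<and> mmult X (ext_op V X (kraus_effect V Ks)) P = P"
    using partial_correct_on_iff_kraus[OF assms] by blast
qed (use total_correct_on_if_kraus[OF fin VX Ks pP pQ] in blast)

lemma partial_correct_on_ext_op:
  assumes fin: "finite X" and VW: "V \<subseteq> W" and WX: "W \<subseteq> X" and dE: "dprog V E"
    and pP: "projector W P" and pQ: "projector W Q" and H: "partial_correct_on V W E P Q"
  shows "partial_correct_on V X E (ext_op W X P) (ext_op W X Q)"
proof -
  have fW: "finite W" using fin WX finite_subset by blast
  obtain Ks where Ks: "kraus_rep V Ks E" using dE by (auto simp: dprog_def)
  have "set Ks \<subseteq> ops_mapping V W P Q" using H partial_correct_on_iff_kraus[OF fW VW dE Ks pP pQ] by blast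
  then have "set Ks \<subseteq> ops_mapping V X (ext_op W X P) (ext_op W X Q)"
    using ops_mapping_ext_op[OF fin VW WX] by blast
  then show ?thesis
    using partial_correct_on_iff_kraus[OF fin _ dE Ks projector_ext_op[OF fin WX pP] projector_ext_op[OF fin WX pQ]] VW WX
    by blast
qed

lemma total_correct_on_ext_op:
  assumes fin: "finite X" and VW: "V \<subseteq> W" and WX: "W \<subseteq> X" and dE: "dprog V E"
    and pP: "projector W P" and pQ: "projector W Q" and H: "total_correct_on V W E P Q"
  shows "total_correct_on V X E (ext_op W X P) (ext_op W X Q)"
proof -
  have fW: "finite W" using fin WX finite_subset by blast
  obtain Ks where Ks: "kraus_rep V Ks E" using dE by (auto simp: dprog_def)
  have "set Ks \<subseteq> ops_mapping V W P Q" and M: "mmult W (ext_op V W (kraus_effect V Ks)) P = P"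
    using H total_correct_on_iff_kraus[OF fW VW dE Ks pP pQ] by blast+
  then have "set Ks \<subseteq> ops_mapping V X (ext_op W X P) (ext_op W X Q)"
    using ops_mapping_ext_op[OF fin VW WX] by blast
  moreover have "mmult X (ext_op V X (kraus_effect V Ks)) (ext_op W X P) = ext_op W X P"
    by (simp add: mmult_ext_op_ext_op[OF fin VW WX] M)
  ultimately show ?thesis
    using total_correct_on_iff_kraus[OF fin _ dE Ks projector_ext_op[OF fin WX pP] projector_ext_op[OF fin WX pQ]] VW WX
    by blast
qed

text \<open>Correctness on W passes to every extension of W, because the Kraus conditions do.\<close>
lemma valid_par_iff_partial_correct_on_self:
  assumes nE: "nprog V \<E>" and fW: "finite W" and VW: "V \<subseteq> W"
    and pP: "projector W P" and pQ: "projector W Q"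
  shows "valid_par V \<E> W P Q \<longleftrightarrow> (\<forall>E\<in>\<E>. partial_correct_on V W E P Q)"
proof -
  have "ext_op W W P = P" "ext_op W W Q = Q" using pP pQ by (simp_all add: ext_op_self projector_def)
  moreover have "dprog V E" if "E \<in> \<E>" for E using nE that by (auto simp: nprog_def)
  ultimately show ?thesis
    unfolding valid_par_iff_partial_correct_on[OF nE pQ]
    using fW VW partial_correct_on_ext_op[OF _ VW _ _ pP pQ] by (metis Un_absorb1 order_refl)
qed

lemma valid_tot_iff_total_correct_on_self:
  assumes nE: "nprog V \<E>" and fW: "finite W" and VW: "V \<subseteq> W"
    and pP: "projector W P" and pQ: "projector W Q"
  shows "valid_tot V \<E> W P Q \<longleftrightarrow> (\<forall>E\<in>\<E>. total_correct_on V W E P Q)"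
proof -
  have "ext_op W W P = P" "ext_op W W Q = Q" using pP pQ by (simp_all add: ext_op_self projector_def)
  moreover have "dprog V E" if "E \<in> \<E>" for E using nE that by (auto simp: nprog_def)
  ultimately show ?thesis
    unfolding valid_tot_iff_total_correct_on[OF nE pQ]
    using fW VW total_correct_on_ext_op[OF _ VW _ _ pP pQ] by (metis Un_absorb1 order_refl)
qed

lemma all_partial_correct_on_iff_join_span:
  assumes fin: "finite X" and VX: "V \<subseteq> X" and dp: "\<And>E. E \<in> \<G> \<Longrightarrow> dprog V E"
    and pP: "projector X P" and pQ: "projector X Q"
  shows "(\<forall>E\<in>\<G>. partial_correct_on V X E P Q) \<longleftrightarrow> join_span V \<G> \<subseteq> ops_mapping V X P Q"
proof
  assume "\<forall>E\<in>\<G>. partial_correct_on V X E P Q"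
  then show "join_span V \<G> \<subseteq> ops_mapping V X P Q"
    using partial_correct_on_iff_kraus[OF fin VX dp _ pP pQ]
    by (intro join_span_subset[OF lin_closed_ops_mapping]) blast
next
  assume sub: "join_span V \<G> \<subseteq> ops_mapping V X P Q"
  show "\<forall>E\<in>\<G>. partial_correct_on V X E P Q"
  proof
    fix E assume E: "E \<in> \<G>"
    obtain Ks where Ks: "kraus_rep V Ks E" using dp[OF E] by (auto simp: dprog_def)
    have "set Ks \<subseteq> ops_mapping V X P Q" using sub kraus_op_in_join_span[OF E Ks] by blast
    then show "partial_correct_on V X E P Q" using partial_correct_on_iff_kraus[OF fin VX dp[OF E] Ks pP pQ] by blast
  qed
qed

section \<open>The Choi vector\<close>

text \<open>H_V is doubled by a disjoint shifted copy of V. The (unnormalised) maximally entangled vector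
  max_ent V is the sum of |S> |S'> over S \<subseteq> V, where S' is the shifted copy of S; choi_vec V K is
  (K (x) I) max_ent V, whose entry at S \<union> T' is K S T.\<close>
definition choi_offset :: "qvar set \<Rightarrow> nat" where "choi_offset V = Suc (Max (insert 0 V))"
definition choi_shift :: "qvar set \<Rightarrow> qvar set \<Rightarrow> qvar set" where "choi_shift V T = (\<lambda>n. n + choi_offset V) ` T"
definition choi_space :: "qvar set \<Rightarrow> qvar set" where "choi_space V = V \<union> choi_shift V V"
definition max_ent :: "qvar set \<Rightarrow> vec" where
  "max_ent V = (\<lambda>R. if R \<subseteq> choi_space V \<and> R \<inter> choi_shift V V = choi_shift V (R \<inter> V) then 1 else 0)"
definition choi_vec :: "qvar set \<Rightarrow> op \<Rightarrow> vec" where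
  "choi_vec V K = apply_op (choi_space V) (ext_op V (choi_space V) K) (max_ent V)"

lemma less_choi_offset: "finite V \<Longrightarrow> v \<in> V \<Longrightarrow> v < choi_offset V"
  unfolding choi_offset_def by (simp add: le_imp_less_Suc)

lemma disjoint_choi_shift: "finite V \<Longrightarrow> V \<inter> choi_shift V T = {}"
  unfolding choi_shift_def using less_choi_offset by fastforce

lemma finite_choi_space: "finite V \<Longrightarrow> finite (choi_space V)"
  by (simp add: choi_space_def choi_shift_def)

lemma subset_choi_space: "V \<subseteq> choi_space V" by (simp add: choi_space_def)

lemma choi_shift_inj: "choi_shift V S = choi_shift V T \<Longrightarrow> S = T"
  unfolding choi_shift_def by (metis add_right_imp_eq inj_image_eq_iff inj_on_def)

lemma choi_shift_mono: "T \<subseteq> V \<Longrightarrow> choi_shift V T \<subseteq> choi_shift V V"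
  unfolding choi_shift_def by blast

lemma block_vec_max_ent:
  assumes fV: "finite V" and T: "T \<subseteq> V"
  shows "block_vec V (choi_shift V T) (max_ent V) = ket T"
proof (intro ext)
  fix u show "block_vec V (choi_shift V T) (max_ent V) u = ket T u"
  proof (cases "u \<subseteq> V")
    case True
    have d: "V \<inter> choi_shift V V = {}" using disjoint_choi_shift[OF fV] .
    have s: "choi_shift V T \<subseteq> choi_shift V V" using choi_shift_mono[OF T] .
    have a: "(u \<union> choi_shift V T) \<inter> choi_shift V V = choi_shift V T" using True d s by blast
    have b: "(u \<union> choi_shift V T) \<inter> V = u" using True d s by blast
    have c: "u \<union> choi_shift V T \<subseteq> choi_space V" using True s by (auto simp: choi_space_def)
    have "block_vec V (choi_shift V T) (max_ent V) u = max_ent V (u \<union> choi_shift V T)" using True by (simp add: block_vec_def)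
    also have "\<dots> = (if choi_shift V T = choi_shift V u then 1 else 0)" unfolding max_ent_def using a b c by presburger
    also have "\<dots> = ket T u" unfolding ket_def using choi_shift_inj by metis
    finally show ?thesis .
  next
    case False
    then have "u \<noteq> T" using T by blast
    then show ?thesis using False by (simp add: block_vec_def ket_def)
  qed
qed

lemma choi_vec_at:
  assumes fV: "finite V" and S: "S \<subseteq> V" and T: "T \<subseteq> V"
  shows "choi_vec V K (S \<union> choi_shift V T) = K S T"
proof -
  have d: "V \<inter> choi_shift V V = {}" using disjoint_choi_shift[OF fV] .
  have s: "choi_shift V T \<subseteq> choi_shift V V" using choi_shift_mono[OF T] .
  have R: "S \<union> choi_shift V T \<subseteq> choi_space V" using S s by (auto simp: choi_space_def)
  have a: "(S \<union> choi_shift V T) - V = choi_shift V T" using d s S by auto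
  have b: "(S \<union> choi_shift V T) \<inter> V = S" using S d s by auto
  have "choi_vec V K (S \<union> choi_shift V T) = apply_op V K (block_vec V ((S \<union> choi_shift V T) - V) (max_ent V)) ((S \<union> choi_shift V T) \<inter> V)"
    unfolding choi_vec_def apply_op_ext_op[OF finite_choi_space[OF fV] subset_choi_space] using R by (simp only: if_True)
  also have "\<dots> = apply_op V K (ket T) S" by (simp only: a b block_vec_max_ent[OF fV T])
  also have "\<dots> = K S T" using S by (simp only: apply_op_ket[OF T fV] if_True)
  finally show ?thesis .
qed

lemma supp_vec_choi_vec: "supp_vec (choi_space V) (choi_vec V K)"
  by (simp add: choi_vec_def)

lemma choi_vec_inj:
  assumes fV: "finite V" and s1: "supp_op V K1" and s2: "supp_op V K2" and e: "choi_vec V K1 = choi_vec V K2"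
  shows "K1 = K2"
proof (intro ext)
  fix S T show "K1 S T = K2 S T"
  proof (cases "S \<subseteq> V \<and> T \<subseteq> V")
    case True
    then show ?thesis using choi_vec_at[OF fV, of S T K1] choi_vec_at[OF fV, of S T K2] e by simp
  qed (use s1 s2 in \<open>auto simp: supp_op_def\<close>)
qed

lemma choi_vec_mmult:
  assumes "finite V"
  shows "choi_vec V (mmult V K Tp) = apply_op (choi_space V) (ext_op V (choi_space V) K) (choi_vec V Tp)"
  by (simp add: choi_vec_def mmult_ext_op[OF finite_choi_space[OF assms] subset_choi_space, symmetric] apply_op_mmult)


definition line_proj :: "qvar set \<Rightarrow> vec \<Rightarrow> op" where
  "line_proj W v = proj_of W {(\<lambda>R. c * v R) | c. True}"

lemma line_proj_spec:
  assumes fW: "finite W" and sv: "supp_vec W v"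
  shows "projector W (line_proj W v) \<and> op_range W (line_proj W v) = {(\<lambda>R. c * v R) | c. True}"
  unfolding line_proj_def
proof (rule proj_of_spec[OF fW])
  show "is_subspace W {(\<lambda>R. c * v R) | c. True}"
    unfolding is_subspace_def
  proof (intro conjI ballI allI)
    show "(\<lambda>_. 0) \<in> {(\<lambda>R. c * v R) | c. True}" by (rule CollectI, rule exI[of _ 0]) simp
    fix u assume "u \<in> {(\<lambda>R. c * v R) | c. True}"
    then show "supp_vec W u" using sv by (auto simp: supp_vec_def)
  next
    fix u w a b assume "u \<in> {(\<lambda>R. c * v R) | c. True}" "w \<in> {(\<lambda>R. c * v R) | c. True}"
    then obtain c1 c2 where "u = (\<lambda>R. c1 * v R)" "w = (\<lambda>R. c2 * v R)" by blast
    then show "(\<lambda>S. a * u S + b * w S) \<in> {(\<lambda>R. c * v R) | c. True}"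
      by (intro CollectI exI[of _ "a * c1 + b * c2"]) (simp add: algebra_simps)
  qed
qed

lemma apply_op_line_proj_ket:
  assumes fW: "finite W" and sv: "supp_vec W v" and S: "S \<subseteq> W"
  obtains c where "apply_op W (line_proj W v) (ket S) = (\<lambda>R. c * v R)"
proof -
  have "apply_op W (line_proj W v) (ket S) \<in> op_range W (line_proj W v)"
    using S by (auto simp: op_range_def supp_vec_ket)
  then show ?thesis using line_proj_spec[OF fW sv] that by auto
qed

lemma mmult_line_proj_eq_0:
  assumes fW: "finite W" and sv: "supp_vec W v" and sA: "supp_op W A" and Av: "apply_op W A v = (\<lambda>R. 0)"
  shows "mmult W A (line_proj W v) = (\<lambda>S T. 0)"
proof (rule op_eqI_ket[OF fW])
  fix S assume "S \<subseteq> W"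
  then obtain c where c: "apply_op W (line_proj W v) (ket S) = (\<lambda>R. c * v R)"
    using apply_op_line_proj_ket[OF fW sv] by blast
  show "apply_op W (mmult W A (line_proj W v)) (ket S) = apply_op W (\<lambda>S T. 0) (ket S)"
    by (simp add: apply_op_mmult c apply_op_scale_vec Av)
qed (simp, simp add: supp_op_def)

lemma mmult_line_proj_fixed:
  assumes fW: "finite W" and sv: "supp_vec W v" and Av: "apply_op W A v = v"
  shows "mmult W A (line_proj W v) = line_proj W v"
proof (rule op_eqI_ket[OF fW])
  fix S assume "S \<subseteq> W"
  then obtain c where c: "apply_op W (line_proj W v) (ket S) = (\<lambda>R. c * v R)"
    using apply_op_line_proj_ket[OF fW sv] by blast
  show "apply_op W (mmult W A (line_proj W v)) (ket S) = apply_op W (line_proj W v) (ket S)"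
    by (simp add: apply_op_mmult c apply_op_scale_vec Av)
qed (simp, use line_proj_spec[OF fW sv] in \<open>simp add: projector_def\<close>)

lemma apply_line_proj_self:
  assumes "finite W" and "supp_vec W v"
  shows "apply_op W (line_proj W v) v = v"
proof -
  have "v \<in> op_range W (line_proj W v)"
    using line_proj_spec[OF assms] by (auto intro: exI[of _ 1])
  then show ?thesis using op_range_projector line_proj_spec[OF assms] by blast
qed

lemma choi_vec_lincomb2: "choi_vec V (\<lambda>S T. a * x S T + b * y S T) = (\<lambda>R. a * choi_vec V x R + b * choi_vec V y R)"
  unfolding choi_vec_def by (simp only: ext_op_add ext_op_scale apply_op_add_op apply_op_scale_op)

lemma choi_vec_zero: "choi_vec V (\<lambda>S T. 0) = (\<lambda>R. 0)"
  by (simp add: choi_vec_def)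

lemma is_subspace_choi_vec_image: "is_subspace (choi_space V) (choi_vec V ` join_span V \<G>)"
  unfolding is_subspace_def
proof (intro conjI ballI allI)
  have "(\<lambda>S T. 0) \<in> join_span V \<G>" unfolding join_span_def by (rule cspan_zero)
  then have "choi_vec V (\<lambda>S T. 0) \<in> choi_vec V ` join_span V \<G>" by (rule imageI)
  then show "(\<lambda>_. 0) \<in> choi_vec V ` join_span V \<G>" by (simp only: choi_vec_zero)
  fix u assume "u \<in> choi_vec V ` join_span V \<G>" then show "supp_vec (choi_space V) u" by (auto simp: supp_vec_choi_vec)
next
  fix u w a b assume "u \<in> choi_vec V ` join_span V \<G>" "w \<in> choi_vec V ` join_span V \<G>"
  then obtain x y where xy: "x \<in> join_span V \<G>" "y \<in> join_span V \<G>" "u = choi_vec V x" "w = choi_vec V y" by blast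
  have "(\<lambda>S T. a * x S T + b * y S T) \<in> join_span V \<G>"
    using xy(1,2) unfolding join_span_def by (rule cspan_lincomb2)
  then have "choi_vec V (\<lambda>S T. a * x S T + b * y S T) \<in> choi_vec V ` join_span V \<G>" by (rule imageI)
  then show "(\<lambda>S. a * u S + b * w S) \<in> choi_vec V ` join_span V \<G>" by (simp only: choi_vec_lincomb2 xy(3,4))
qed


definition choi_pre :: "qvar set \<Rightarrow> op \<Rightarrow> op" where
  "choi_pre V T = line_proj (choi_space V) (choi_vec V T)"

definition choi_post :: "qvar set \<Rightarrow> superop set \<Rightarrow> op" where
  "choi_post V \<G> = proj_of (choi_space V) (choi_vec V ` join_span V \<G>)"

lemma projector_choi_pre: "finite V \<Longrightarrow> projector (choi_space V) (choi_pre V T)"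
  using line_proj_spec[OF finite_choi_space supp_vec_choi_vec] by (simp add: choi_pre_def)

lemma choi_post_spec:
  "finite V \<Longrightarrow> projector (choi_space V) (choi_post V \<G>)
    \<and> op_range (choi_space V) (choi_post V \<G>) = choi_vec V ` join_span V \<G>"
  unfolding choi_post_def by (rule proj_of_spec[OF finite_choi_space is_subspace_choi_vec_image])

lemma mmult_ext_op_choi_pre:
  assumes fV: "finite V" and MT: "mmult V M T = T"
  shows "mmult (choi_space V) (ext_op V (choi_space V) M) (choi_pre V T) = choi_pre V T"
  unfolding choi_pre_def
  by (rule mmult_line_proj_fixed[OF finite_choi_space[OF fV] supp_vec_choi_vec])
     (simp add: choi_vec_mmult[OF fV, symmetric] MT)

text \<open>Injectivity of K \<mapsto> (K (x) I) max_ent turns membership in the image of span(G) into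
  membership in span(G).\<close>
lemma ops_mapping_choi_iff:
  assumes fV: "finite V"
  shows "K \<in> ops_mapping V (choi_space V) (choi_pre V T) (choi_post V \<G>)
    \<longleftrightarrow> supp_op V K \<and> mmult V K T \<in> join_span V \<G>"
proof -
  define W where "W = choi_space V"
  define R where "R = choi_post V \<G>"
  have fW: "finite W" by (simp add: W_def finite_choi_space[OF fV])
  have pR: "projector W R" and rR: "op_range W R = choi_vec V ` join_span V \<G>"
    using choi_post_spec[OF fV] by (simp_all add: W_def R_def)
  have sv: "supp_vec W (choi_vec V T)" by (simp add: W_def supp_vec_choi_vec)
  have Kv: "apply_op W (ext_op V W K) (choi_vec V T) = choi_vec V (mmult V K T)"
    by (simp add: W_def choi_vec_mmult[OF fV])
  have "mmult W (mmult W (idop W - R) (ext_op V W K)) (choi_pre V T) = (\<lambda>S T. 0)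
      \<longleftrightarrow> choi_vec V (mmult V K T) \<in> op_range W R"
  proof
    assume "mmult W (mmult W (idop W - R) (ext_op V W K)) (choi_pre V T) = (\<lambda>S T. 0)"
    then have "apply_op W (idop W - R) (choi_vec V (mmult V K T)) = (\<lambda>S. 0)"
      using apply_line_proj_self[OF fW sv] Kv
      by (metis W_def apply_op_mmult apply_op_zero_op choi_pre_def)
    then show "choi_vec V (mmult V K T) \<in> op_range W R"
      using op_range_projector[OF pR] fW by (simp add: W_def supp_vec_choi_vec apply_op_compl fun_eq_iff)
  next
    assume "choi_vec V (mmult V K T) \<in> op_range W R"
    then have "apply_op W (mmult W (idop W - R) (ext_op V W K)) (choi_vec V T) = (\<lambda>S. 0)"
      using op_range_projector[OF pR] fW by (simp add: apply_op_mmult Kv apply_op_compl)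
    then show "mmult W (mmult W (idop W - R) (ext_op V W K)) (choi_pre V T) = (\<lambda>S T. 0)"
      unfolding choi_pre_def W_def by (intro mmult_line_proj_eq_0[OF _ supp_vec_choi_vec]) (simp_all add: fV finite_choi_space)
  qed
  moreover have "choi_vec V (mmult V K T) \<in> choi_vec V ` join_span V \<G> \<longleftrightarrow> mmult V K T \<in> join_span V \<G>"
    using choi_vec_inj[OF fV _ _] join_span_supp_op by (auto, metis mem_Collect_eq subsetD supp_op_mmult)
  ultimately show ?thesis using rR by (simp add: ops_mapping_def W_def R_def)
qed

section \<open>Partial correctness: part (1)\<close>

lemma le_P_if_join_span_subset:
  assumes nE: "nprog V \<E>" and nF: "nprog V \<F>" and sub: "join_span V \<F> \<subseteq> join_span V \<E>"
  shows "le_P V \<E> \<F>"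
  unfolding le_P_def
proof (intro allI impI, elim conjE)
  fix W P Q assume pP: "projector W P" and pQ: "projector W Q" and vE: "valid_par V \<E> W P Q"
  have dE: "\<And>E. E \<in> \<E> \<Longrightarrow> dprog V E" and dF: "\<And>F. F \<in> \<F> \<Longrightarrow> dprog V F"
    using nE nF by (auto simp: nprog_def)
  show "valid_par V \<F> W P Q"
    unfolding valid_par_iff_partial_correct_on[OF nF pQ]
  proof (intro ballI allI impI)
    fix F X assume F: "F \<in> \<F>" and X: "finite X \<and> V \<union> W \<subseteq> X"
    then have fX: "finite X" and VX: "V \<subseteq> X" and WX: "W \<subseteq> X" by auto
    note pPX = projector_ext_op[OF fX WX pP] and pQX = projector_ext_op[OF fX WX pQ]
    have "join_span V \<E> \<subseteq> ops_mapping V X (ext_op W X P) (ext_op W X Q)"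
      using vE X all_partial_correct_on_iff_join_span[OF fX VX dE pPX pQX]
      unfolding valid_par_iff_partial_correct_on[OF nE pQ] by blast
    then show "partial_correct_on V X F (ext_op W X P) (ext_op W X Q)"
      using F sub all_partial_correct_on_iff_join_span[OF fX VX dF pPX pQX] by blast
  qed
qed

lemma partial_correct_on_choi_iff:
  assumes fV: "finite V" and dE: "dprog V E" and Ks: "kraus_rep V Ks E"
  shows "partial_correct_on V (choi_space V) E (choi_pre V T) (choi_post V \<G>)
    \<longleftrightarrow> (\<forall>K\<in>set Ks. mmult V K T \<in> join_span V \<G>)"
  using partial_correct_on_iff_kraus[OF finite_choi_space[OF fV] subset_choi_space dE Ks
      projector_choi_pre[OF fV] conjunct1[OF choi_post_spec[OF fV]]]
    ops_mapping_choi_iff[OF fV] kraus_rep_supp_op[OF Ks]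
  by blast

lemma join_span_subset_if_le_P:
  assumes fV: "finite V" and nE: "nprog V \<E>" and nF: "nprog V \<F>" and le: "le_P V \<E> \<F>"
  shows "join_span V \<F> \<subseteq> join_span V \<E>"
proof -
  define W where "W = choi_space V"
  define P where "P = choi_pre V (idop V)"
  define R where "R = choi_post V \<E>"
  have fW: "finite W" and VW: "V \<subseteq> W" by (simp_all add: W_def finite_choi_space[OF fV] subset_choi_space)
  have pP: "projector W P" and pR: "projector W R"
    using projector_choi_pre[OF fV] choi_post_spec[OF fV] by (simp_all add: W_def P_def R_def)
  have dE: "\<And>E. E \<in> \<E> \<Longrightarrow> dprog V E" and dF: "\<And>F. F \<in> \<F> \<Longrightarrow> dprog V F"
    using nE nF by (auto simp: nprog_def)
  have idop: "mmult V K (idop V) = K" if "kraus_rep V Ks E" "K \<in> set Ks" for K Ks E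
    using mmult_idop_right[OF fV kraus_rep_supp_op[OF that]] .
  have "\<forall>E\<in>\<E>. partial_correct_on V W E P R"
  proof
    fix E assume E: "E \<in> \<E>"
    obtain Ks where Ks: "kraus_rep V Ks E" using dE[OF E] by (auto simp: dprog_def)
    show "partial_correct_on V W E P R"
      unfolding W_def P_def R_def partial_correct_on_choi_iff[OF fV dE[OF E] Ks]
      using idop[OF Ks] kraus_op_in_join_span[OF E Ks] by simp
  qed
  then have "valid_par V \<F> W P R"
    using le fW pP pR valid_par_iff_partial_correct_on_self[OF nE fW VW pP pR] unfolding le_P_def by blast
  then have cF: "\<forall>F\<in>\<F>. partial_correct_on V W F P R"
    using valid_par_iff_partial_correct_on_self[OF nF fW VW pP pR] by blast
  show ?thesis
  proof (rule join_span_subset[OF lin_closed_join_span])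
    fix F Ls assume F: "F \<in> \<F>" and Ls: "kraus_rep V Ls F"
    show "set Ls \<subseteq> join_span V \<E>"
      using cF F idop[OF Ls] partial_correct_on_choi_iff[OF fV dF[OF F] Ls]
      by (auto simp: W_def P_def R_def)
  qed
qed


section \<open>Total correctness: part (2)\<close>

definition term_proj :: "qvar set \<Rightarrow> superop set \<Rightarrow> op" where
  "term_proj V \<E> = proj_of V (term_space_set V \<E>)"

lemma is_subspace_term_space_set:
  assumes fV: "finite V" and nE: "nprog V \<E>"
  shows "is_subspace V (term_space_set V \<E>)"
  unfolding is_subspace_def
proof (intro conjI ballI allI)
  show "(\<lambda>_. 0) \<in> term_space_set V \<E>"
  proof -
    have "(\<lambda>_. 0) \<in> term_space V E" if "E \<in> \<E>" for E
    proof -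
      have dE: "dprog V E" using nprog_dprog[OF nE that] .
      then obtain Ks where Ks: "kraus_rep V Ks E" by (auto simp: dprog_def)
      show ?thesis unfolding term_space_kraus_iff[OF fV dE Ks] by (simp add: supp_vec_def)
    qed
    then show ?thesis by (simp add: term_space_set_def supp_vec_def)
  qed
  fix u assume "u \<in> term_space_set V \<E>" then show "supp_vec V u" by (simp add: term_space_set_def)
next
  fix u w a b assume u: "u \<in> term_space_set V \<E>" and w: "w \<in> term_space_set V \<E>"
  have "(\<lambda>S. a * u S + b * w S) \<in> term_space V E" if E: "E \<in> \<E>" for E
  proof -
    have dE: "dprog V E" using nprog_dprog[OF nE E] .
    then obtain Ks where Ks: "kraus_rep V Ks E" by (auto simp: dprog_def)
    have "u \<in> term_space V E" "w \<in> term_space V E" using u w E by (auto simp: term_space_set_def)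
    then show ?thesis unfolding term_space_kraus_iff[OF fV dE Ks]
      by (simp add: apply_op_lincomb supp_vec_def)
  qed
  moreover have "supp_vec V (\<lambda>S. a * u S + b * w S)" using u w by (simp add: term_space_set_def supp_vec_def)
  ultimately show "(\<lambda>S. a * u S + b * w S) \<in> term_space_set V \<E>" by (simp add: term_space_set_def)
qed


lemma term_proj_spec:
  assumes "finite V" and "nprog V \<E>"
  shows "projector V (term_proj V \<E>) \<and> op_range V (term_proj V \<E>) = term_space_set V \<E>"
  unfolding term_proj_def by (rule proj_of_spec[OF assms(1) is_subspace_term_space_set[OF assms]])

lemma kraus_effect_fixes_term_proj:
  assumes fV: "finite V" and nE: "nprog V \<E>" and dF: "dprog V F" and Ls: "kraus_rep V Ls F"
    and sub: "term_space_set V \<E> \<subseteq> term_space V F"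
  shows "mmult V (kraus_effect V Ls) (term_proj V \<E>) = term_proj V \<E>"
  using term_proj_spec[OF fV nE] sub by (intro kraus_effect_fixes_projector[OF fV dF Ls]) simp_all

lemma ext_term_proj_fixes_if_total_correct_on:
  assumes fin: "finite X" and VX: "V \<subseteq> X" and nE: "nprog V \<E>"
    and pP: "projector X P" and pQ: "projector X Q" and H: "\<forall>E\<in>\<E>. total_correct_on V X E P Q"
  shows "mmult X (ext_op V X (term_proj V \<E>)) P = P"
proof (rule mmult_ext_op_fixes_if_blocks[OF fin VX pP])
  have fV: "finite V" using fin VX finite_subset by blast
  fix \<psi> a assume "supp_vec X \<psi>" "apply_op X P \<psi> = \<psi>" "a \<subseteq> X - V"
  then have "block_vec V a \<psi> \<in> term_space V E" if "E \<in> \<E>" for E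
    using H that nE by (intro block_vec_in_term_space_if_total_correct_on[OF fin VX _ pP pQ]) (auto simp: nprog_def)
  then have "block_vec V a \<psi> \<in> op_range V (term_proj V \<E>)"
    using term_proj_spec[OF fV nE] by (simp add: term_space_set_def supp_vec_block_vec)
  then show "apply_op V (term_proj V \<E>) (block_vec V a \<psi>) = block_vec V a \<psi>"
    using op_range_projector term_proj_spec[OF fV nE] by blast
qed

text \<open>On inputs fixed by T (x) I, a program and its restriction by P_T behave alike; so the span
  condition on the restrictions transfers the Kraus condition from the first family to the second.\<close>
lemma kraus_ops_mapping_if_comp_join_span_subset:
  assumes fin: "finite X" and VX: "V \<subseteq> X" and nE: "nprog V \<E>" and nF: "nprog V \<F>"
    and pT: "projector V T" and pP: "projector X P" and pQ: "projector X Q"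
    and TP: "mmult X (ext_op V X T) P = P" and H: "\<forall>E\<in>\<E>. partial_correct_on V X E P Q"
    and sub: "join_span V ((\<lambda>F. F \<circ> proj_so V T) ` \<F>) \<subseteq> join_span V ((\<lambda>E. E \<circ> proj_so V T) ` \<E>)"
    and F: "F \<in> \<F>" and Ls: "kraus_rep V Ls F"
  shows "set Ls \<subseteq> ops_mapping V X P Q"
proof -
  have fV: "finite V" using fin VX finite_subset by blast
  have dE: "\<And>E. E \<in> \<E> \<Longrightarrow> dprog V E" and dF: "dprog V F" using nE nF F by (auto simp: nprog_def)
  have dG: "\<And>G. G \<in> (\<lambda>E. E \<circ> proj_so V T) ` \<E> \<Longrightarrow> dprog V G"
    and dG': "\<And>G. G \<in> (\<lambda>F. F \<circ> proj_so V T) ` \<F> \<Longrightarrow> dprog V G"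
    using nE nF dprog_comp_proj_so[OF fV _ pT] by (auto simp: nprog_def)
  have "(\<forall>G\<in>(\<lambda>E. E \<circ> proj_so V T) ` \<E>. partial_correct_on V X G P Q)
      \<longleftrightarrow> join_span V ((\<lambda>E. E \<circ> proj_so V T) ` \<E>) \<subseteq> ops_mapping V X P Q"
    by (rule all_partial_correct_on_iff_join_span[OF fin VX dG pP pQ])
  moreover have "\<forall>G\<in>(\<lambda>E. E \<circ> proj_so V T) ` \<E>. partial_correct_on V X G P Q"
    using H partial_correct_on_comp_proj_so[OF fin VX dE pT pP pQ TP] by blast
  ultimately have "join_span V ((\<lambda>E. E \<circ> proj_so V T) ` \<E>) \<subseteq> ops_mapping V X P Q"
    by blast
  then have "join_span V ((\<lambda>F. F \<circ> proj_so V T) ` \<F>) \<subseteq> ops_mapping V X P Q"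
    using sub by (rule order_trans[rotated])
  moreover have "(\<forall>G\<in>(\<lambda>F. F \<circ> proj_so V T) ` \<F>. partial_correct_on V X G P Q)
      \<longleftrightarrow> join_span V ((\<lambda>F. F \<circ> proj_so V T) ` \<F>) \<subseteq> ops_mapping V X P Q"
    by (rule all_partial_correct_on_iff_join_span[OF fin VX dG' pP pQ])
  ultimately have "\<forall>G\<in>(\<lambda>F. F \<circ> proj_so V T) ` \<F>. partial_correct_on V X G P Q"
    by blast
  then have "partial_correct_on V X (F \<circ> proj_so V T) P Q" using F by blast
  then have LT: "set (map (\<lambda>L. mmult V L T) Ls) \<subseteq> ops_mapping V X P Q"
    using partial_correct_on_iff_kraus[OF fin VX dprog_comp_proj_so[OF fV dF pT]
        kraus_rep_comp_proj_so[OF pT Ls] pP pQ] by blast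
  show ?thesis
  proof
    fix L assume L: "L \<in> set Ls"
    then have "mmult V L T \<in> ops_mapping V X P Q" using LT by auto
    then show "L \<in> ops_mapping V X P Q"
      using ops_mapping_mmult_right_iff[OF fin VX kraus_rep_supp_op[OF Ls L] TP] by simp
  qed
qed

lemma total_correct_on_if_conditions:
  assumes fin: "finite X" and VX: "V \<subseteq> X" and nE: "nprog V \<E>" and nF: "nprog V \<F>"
    and sub1: "term_space_set V \<E> \<subseteq> term_space_set V \<F>"
    and sub2: "join_span V ((\<lambda>F. F \<circ> proj_so V (term_proj V \<E>)) ` \<F>)
      \<subseteq> join_span V ((\<lambda>E. E \<circ> proj_so V (term_proj V \<E>)) ` \<E>)"
    and pP: "projector X P" and pQ: "projector X Q" and H: "\<forall>E\<in>\<E>. total_correct_on V X E P Q"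
    and F: "F \<in> \<F>"
  shows "total_correct_on V X F P Q"
proof -
  define T where "T = term_proj V \<E>"
  have fV: "finite V" using fin VX finite_subset by blast
  have pT: "projector V T" using term_proj_spec[OF fV nE] by (simp add: T_def)
  have dF: "dprog V F" by (rule nprog_dprog[OF nF F])
  obtain Ls where Ls: "kraus_rep V Ls F" using dF by (auto simp: dprog_def)
  have TP: "mmult X (ext_op V X T) P = P"
    unfolding T_def by (rule ext_term_proj_fixes_if_total_correct_on[OF fin VX nE pP pQ H])
  have "\<forall>E\<in>\<E>. partial_correct_on V X E P Q"
    using H nprog_dprog[OF nE] total_correct_on_imp_partial_correct_on[OF fin VX] by blast
  then have "set Ls \<subseteq> ops_mapping V X P Q"
    using kraus_ops_mapping_if_comp_join_span_subset[OF fin VX nE nF pT pP pQ TP _ _ F Ls] sub2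
    by (simp add: T_def)
  moreover have "mmult V (kraus_effect V Ls) T = T"
    using sub1 F unfolding T_def
    by (intro kraus_effect_fixes_term_proj[OF fV nE dF Ls]) (auto simp: term_space_set_def)
  then have "mmult X (ext_op V X (kraus_effect V Ls)) (mmult X (ext_op V X T) P) = mmult X (ext_op V X T) P"
    by (simp only: mmult_assoc[symmetric] mmult_ext_op[OF fin VX])
  then have "mmult X (ext_op V X (kraus_effect V Ls)) P = P"
    by (simp only: TP)
  ultimately show ?thesis by (rule total_correct_on_if_kraus[OF fin VX Ls pP pQ])
qed

lemma le_T_if_conditions:
  assumes nE: "nprog V \<E>" and nF: "nprog V \<F>"
    and sub1: "term_space_set V \<E> \<subseteq> term_space_set V \<F>"
    and sub2: "join_span V ((\<lambda>F. F \<circ> proj_so V (term_proj V \<E>)) ` \<F>)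
      \<subseteq> join_span V ((\<lambda>E. E \<circ> proj_so V (term_proj V \<E>)) ` \<E>)"
  shows "le_T V \<E> \<F>"
  unfolding le_T_def
proof (intro allI impI, elim conjE)
  fix W P Q assume pP: "projector W P" and pQ: "projector W Q" and vE: "valid_tot V \<E> W P Q"
  show "valid_tot V \<F> W P Q"
    unfolding valid_tot_iff_total_correct_on[OF nF pQ]
  proof (intro ballI allI impI)
    fix F X assume F: "F \<in> \<F>" and X: "finite X \<and> V \<union> W \<subseteq> X"
    then have fX: "finite X" and VX: "V \<subseteq> X" and WX: "W \<subseteq> X" by auto
    have "\<forall>E\<in>\<E>. total_correct_on V X E (ext_op W X P) (ext_op W X Q)"
      using vE X unfolding valid_tot_iff_total_correct_on[OF nE pQ] by blast
    then show "total_correct_on V X F (ext_op W X P) (ext_op W X Q)"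
      by (rule total_correct_on_if_conditions[OF fX VX nE nF sub1 sub2
            projector_ext_op[OF fX WX pP] projector_ext_op[OF fX WX pQ] _ F])
  qed
qed

lemma total_correct_on_term_proj:
  assumes fV: "finite V" and nE: "nprog V \<E>" and E: "E \<in> \<E>"
  shows "total_correct_on V V E (term_proj V \<E>) (idop V)"
proof -
  have pT: "projector V (term_proj V \<E>)" using term_proj_spec[OF fV nE] by simp
  have dE: "dprog V E" by (rule nprog_dprog[OF nE E])
  obtain Ks where Ks: "kraus_rep V Ks E" using dE by (auto simp: dprog_def)
  have "set Ks \<subseteq> ops_mapping V V (term_proj V \<E>) (idop V)"
    using kraus_rep_supp_op[OF Ks] by (auto simp: ops_mapping_def mmult_def fun_eq_iff)
  moreover have "mmult V (kraus_effect V Ks) (term_proj V \<E>) = term_proj V \<E>"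
    using E by (intro kraus_effect_fixes_term_proj[OF fV nE dE Ks]) (auto simp: term_space_set_def)
  ultimately show ?thesis
    using total_correct_on_iff_kraus[OF fV subset_refl dE Ks pT projector_idop[OF fV]]
    by (simp add: ext_op_self supp_op_kraus_effect)
qed

lemma op_range_subset_term_space_if_total_correct_on:
  assumes fV: "finite V" and dF: "dprog V F" and pT: "projector V T"
    and H: "total_correct_on V V F T (idop V)"
  shows "op_range V T \<subseteq> term_space V F"
proof
  fix \<psi> assume "\<psi> \<in> op_range V T"
  then have s\<psi>: "supp_vec V \<psi>" and T\<psi>: "apply_op V T \<psi> = \<psi>" using op_range_projector[OF pT] by auto
  obtain Ls where Ls: "kraus_rep V Ls F" using dF by (auto simp: dprog_def)
  have "mmult V (kraus_effect V Ls) T = T"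
    using H total_correct_on_iff_kraus[OF fV subset_refl dF Ls pT projector_idop[OF fV]]
    by (simp add: ext_op_self supp_op_kraus_effect)
  then have "apply_op V (kraus_effect V Ls) (apply_op V T \<psi>) = apply_op V T \<psi>"
    by (simp only: apply_op_mmult[symmetric])
  then have "apply_op V (kraus_effect V Ls) \<psi> = \<psi>"
    by (simp only: T\<psi>)
  then show "\<psi> \<in> term_space V F"
    using fV s\<psi> by (simp add: term_space_kraus_iff[OF fV dF Ls] apply_op_compl)
qed

lemma term_space_set_subset_if_le_T:
  assumes fV: "finite V" and nE: "nprog V \<E>" and nF: "nprog V \<F>" and le: "le_T V \<E> \<F>"
  shows "term_space_set V \<E> \<subseteq> term_space_set V \<F>"
proof -
  define T where "T = term_proj V \<E>"
  have pT: "projector V T" and rT: "op_range V T = term_space_set V \<E>"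
    using term_proj_spec[OF fV nE] by (simp_all add: T_def)
  have pI: "projector V (idop V)" by (rule projector_idop[OF fV])
  have "valid_tot V \<E> V T (idop V)"
    using valid_tot_iff_total_correct_on_self[OF nE fV subset_refl pT pI]
      total_correct_on_term_proj[OF fV nE] by (simp add: T_def)
  then have "valid_tot V \<F> V T (idop V)" using le fV pT pI unfolding le_T_def by blast
  then have "\<forall>F\<in>\<F>. op_range V T \<subseteq> term_space V F"
    using valid_tot_iff_total_correct_on_self[OF nF fV subset_refl pT pI]
      op_range_subset_term_space_if_total_correct_on[OF fV nprog_dprog[OF nF] pT] by blast
  then show ?thesis using rT by (auto simp: term_space_set_def)
qed

lemma total_correct_on_choi_term_test:
  assumes fV: "finite V" and nE: "nprog V \<E>" and E: "E \<in> \<E>"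
  defines "T \<equiv> term_proj V \<E>"
  shows "total_correct_on V (choi_space V) E (choi_pre V T) (choi_post V ((\<lambda>E. E \<circ> proj_so V T) ` \<E>))"
proof -
  have pT: "projector V T" using term_proj_spec[OF fV nE] by (simp add: T_def)
  have dE: "dprog V E" by (rule nprog_dprog[OF nE E])
  obtain Ks where Ks: "kraus_rep V Ks E" using dE by (auto simp: dprog_def)
  have EG: "E \<circ> proj_so V T \<in> (\<lambda>E. E \<circ> proj_so V T) ` \<E>" using E by simp
  have "mmult V K T \<in> join_span V ((\<lambda>E. E \<circ> proj_so V T) ` \<E>)" if "K \<in> set Ks" for K
    using that kraus_op_in_join_span[OF EG kraus_rep_comp_proj_so[OF pT Ks]] by simp
  then have "set Ks \<subseteq> ops_mapping V (choi_space V) (choi_pre V T) (choi_post V ((\<lambda>E. E \<circ> proj_so V T) ` \<E>))"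
    using ops_mapping_choi_iff[OF fV] kraus_rep_supp_op[OF Ks] by auto
  moreover have "mmult V (kraus_effect V Ks) T = T"
    using E unfolding T_def
    by (intro kraus_effect_fixes_term_proj[OF fV nE dE Ks]) (auto simp: term_space_set_def)
  then have "mmult (choi_space V) (ext_op V (choi_space V) (kraus_effect V Ks)) (choi_pre V T) = choi_pre V T"
    by (rule mmult_ext_op_choi_pre[OF fV])
  ultimately show ?thesis
    using total_correct_on_iff_kraus[OF finite_choi_space[OF fV] subset_choi_space dE Ks
        projector_choi_pre[OF fV] conjunct1[OF choi_post_spec[OF fV]]] by blast
qed

lemma comp_join_span_subset_if_le_T:
  assumes fV: "finite V" and nE: "nprog V \<E>" and nF: "nprog V \<F>" and le: "le_T V \<E> \<F>"
  shows "join_span V ((\<lambda>F. F \<circ> proj_so V (term_proj V \<E>)) ` \<F>)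
    \<subseteq> join_span V ((\<lambda>E. E \<circ> proj_so V (term_proj V \<E>)) ` \<E>)"
proof -
  define T where "T = term_proj V \<E>"
  define \<G> where "\<G> = (\<lambda>E. E \<circ> proj_so V T) ` \<E>"
  define W where "W = choi_space V"
  define P where "P = choi_pre V T"
  define R where "R = choi_post V \<G>"
  have pT: "projector V T" using term_proj_spec[OF fV nE] by (simp add: T_def)
  have fW: "finite W" and VW: "V \<subseteq> W" by (simp_all add: W_def finite_choi_space[OF fV] subset_choi_space)
  have pP: "projector W P" and pR: "projector W R"
    using projector_choi_pre[OF fV] choi_post_spec[OF fV] by (simp_all add: W_def P_def R_def)
  have TP: "mmult W (ext_op V W T) P = P"
    unfolding W_def P_def by (rule mmult_ext_op_choi_pre[OF fV projector_idem[OF pT]])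
  have "valid_tot V \<E> W P R"
    using valid_tot_iff_total_correct_on_self[OF nE fW VW pP pR] total_correct_on_choi_term_test[OF fV nE]
    by (simp add: W_def P_def R_def \<G>_def T_def)
  then have "valid_tot V \<F> W P R" using le fW pP pR unfolding le_T_def by blast
  then have tF: "\<forall>F\<in>\<F>. total_correct_on V W F P R"
    using valid_tot_iff_total_correct_on_self[OF nF fW VW pP pR] by blast
  have "join_span V ((\<lambda>F. F \<circ> proj_so V T) ` \<F>) \<subseteq> join_span V \<G>"
  proof (rule join_span_subset[OF lin_closed_join_span])
    fix G Gs assume "G \<in> (\<lambda>F. F \<circ> proj_so V T) ` \<F>" and Gs: "kraus_rep V Gs G"
    then obtain F where F: "F \<in> \<F>" and GF: "G = F \<circ> proj_so V T" by blast
    have dF: "dprog V F" by (rule nprog_dprog[OF nF F])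
    obtain Ls where Ls: "kraus_rep V Ls F" using dF by (auto simp: dprog_def)
    have "partial_correct_on V W G P R"
      using tF F total_correct_on_imp_partial_correct_on[OF fW VW dF]
      unfolding GF by (intro partial_correct_on_comp_proj_so[OF fW VW dF pT pP pR TP]) blast
    then have "\<forall>g\<in>set Gs. mmult V g T \<in> join_span V \<G>"
      using partial_correct_on_choi_iff[OF fV dprog_comp_proj_so[OF fV dF pT] Gs[unfolded GF]]
      by (simp add: W_def P_def R_def GF)
    moreover have "\<forall>g\<in>set Gs. mmult V g T = g"
      using kraus_rep_comp_proj_so_absorb[OF fV pT Ls] Gs GF by blast
    ultimately show "set Gs \<subseteq> join_span V \<G>" by auto
  qed
  then show ?thesis by (simp add: T_def \<G>_def)
qed

lemma term_proj_trace_preserving: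
  assumes fV: "finite V" and tp: "\<forall>E\<in>\<E>. trace_preserving V E"
  shows "term_space_set V \<E> = {\<psi>. supp_vec V \<psi>}" and "term_proj V \<E> = idop V"
proof -
  show T: "term_space_set V \<E> = {\<psi>. supp_vec V \<psi>}"
    using tp by (auto simp: term_space_set_def term_space_def trace_preserving_def)
  have "op_range V (idop V) = {\<psi>. supp_vec V \<psi>}"
    using op_range_projector[OF projector_idop[OF fV]] apply_op_idop[OF fV] by auto
  then show "term_proj V \<E> = idop V"
    unfolding term_proj_def T by (rule proj_of_eq[OF fV projector_idop[OF fV]])
qed

theorem theorem5p8:
  fixes V :: "qvar set" and \<E> \<F> :: "superop set"
  assumes "finite V" and "nprog V \<E>" and "nprog V \<F>"
  shows "(le_P V \<E> \<F> \<longleftrightarrow> join_span V \<F> \<subseteq> join_span V \<E>)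
    \<and> (le_T V \<E> \<F> \<longleftrightarrow>
         term_space_set V \<E> \<subseteq> term_space_set V \<F> \<and>
         join_span V ((\<lambda>F. F \<circ> proj_so V (proj_of V (term_space_set V \<E>))) ` \<F>)
           \<subseteq> join_span V ((\<lambda>E. E \<circ> proj_so V (proj_of V (term_space_set V \<E>))) ` \<E>))
    \<and> ((\<forall>E\<in>\<E>. trace_preserving V E) \<and> (\<forall>F\<in>\<F>. trace_preserving V F)
         \<longrightarrow> (le_T V \<E> \<F> \<longleftrightarrow> le_P V \<E> \<F>))"
proof -
  have part1: "le_P V \<E> \<F> \<longleftrightarrow> join_span V \<F> \<subseteq> join_span V \<E>"
    using le_P_if_join_span_subset[OF assms(2,3)] join_span_subset_if_le_P[OF assms] by blast
  have part2: "le_T V \<E> \<F> \<longleftrightarrow> term_space_set V \<E> \<subseteq> term_space_set V \<F> \<and>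
      join_span V ((\<lambda>F. F \<circ> proj_so V (term_proj V \<E>)) ` \<F>)
        \<subseteq> join_span V ((\<lambda>E. E \<circ> proj_so V (term_proj V \<E>)) ` \<E>)"
    using le_T_if_conditions[OF assms(2,3)] term_space_set_subset_if_le_T[OF assms]
      comp_join_span_subset_if_le_T[OF assms] by blast
  have "le_T V \<E> \<F> \<longleftrightarrow> le_P V \<E> \<F>"
    if tE: "\<forall>E\<in>\<E>. trace_preserving V E" and tF: "\<forall>F\<in>\<F>. trace_preserving V F"
  proof -
    have "(\<lambda>G. G \<circ> proj_so V (idop V)) ` \<G> = \<G>" if "nprog V \<G>" for \<G>
      using comp_proj_so_idop[OF assms(1) nprog_dprog[OF that]] by (simp add: image_cong)
    then show ?thesis
      using part1 part2 assms term_proj_trace_preserving[OF assms(1) tE]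
        term_proj_trace_preserving[OF assms(1) tF] by simp
  qed
  then show ?thesis using part1 part2 unfolding term_proj_def by blast
qed

end
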